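(* Let $X=[0,1[$, let $\widehat{\operatorname{PC}^{\bowtie}}$ be the group of all bijections $X\to X$ that are continuous outside a finite subset of $X$, and let $\operatorname{PC}^{\bowtie}=\widehat{\operatorname{PC}^{\bowtie}}/{\mathfrak S}_{\mathrm{fin}}$. Let $G$ be any subgroup of $\operatorname{PC}^{\bowtie}$. Then the Kapoudjian class of $G$ is zero; that is, the central extension $0\to \mathbb{Z}/2\mathbb{Z}={\mathfrak S}_{\mathrm{fin}}/{\mathfrak A}_{\mathrm{fin}}\to \widehat{G}/{\mathfrak A}_{\mathrm{fin}}\to G\to 1$ splits.
   Context: ${\mathfrak S}_{\mathrm{fin}}$ denotes the group of finitely supported permutations of $X$ (a normal subgroup of $\widehat{\operatorname{PC}^{\bowtie}}$ and of the group ${\mathfrak S}(X)$ of all bijections of $X$), and ${\mathfrak A}_{\mathrm{fin}}$ its subgroup of even permutations (kernel of the classical signature), which is normal in ${\mathfrak S}(X)$. For a subgroup $G$ of ${\mathfrak S}(X)/{\mathfrak S}_{\mathrm{fin}}$, $\widehat{G}$ denotes its inverse image in ${\mathfrak S}(X)$. The Kapoudjian class of $G$ is the class in $H^2(G,\mathbb{Z}/2\mathbb{Z})$ of the central extension $0\to {\mathfrak S}_{\mathrm{fin}}/{\mathfrak A}_{\mathrm{fin}}\cong\mathbb{Z}/2\mathbb{Z}\to \widehat{G}/{\mathfrak A}_{\mathrm{fin}}\to G\to 1$. *)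

theory Defs
  imports "HOL-Analysis.Analysis" "HOL-Algebra.Bij" "HOL-Algebra.Coset"
    "HOL-Combinatorics.Permutations"
begin

definition XX :: "real set" where
  "XX = {0..<1}"

abbreviation SX :: "(real \<Rightarrow> real) monoid" where
  "SX \<equiv> BijGroup XX"

definition PC_hat_carrier :: "(real \<Rightarrow> real) set" where
  "PC_hat_carrier = {f \<in> Bij XX. \<exists>F. finite F \<and> F \<subseteq> XX \<and>
        (\<forall>x \<in> XX - F. continuous (at x within XX) f)}"

definition PC_hat :: "(real \<Rightarrow> real) monoid" where
  "PC_hat = SX\<lparr>carrier := PC_hat_carrier\<rparr>"

definition Sfin :: "(real \<Rightarrow> real) set" where
  "Sfin = {f \<in> Bij XX. finite {x \<in> XX. f x \<noteq> x}}"

definition Afin :: "(real \<Rightarrow> real) set" where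
  "Afin = {f \<in> Sfin. evenperm (restrict_id f XX)}"

definition PC :: "(real \<Rightarrow> real) set monoid" where
  "PC = PC_hat Mod Sfin"

text \<open>Inverse image in PC_hat of a subgroup G of PC.\<close>
definition G_hat :: "(real \<Rightarrow> real) set set \<Rightarrow> (real \<Rightarrow> real) set" where
  "G_hat G = \<Union> G"

text \<open>The central extension  0 \<rightarrow> Sfin/Afin \<rightarrow> G_hat/Afin \<rightarrow> G \<rightarrow> 1 :
  its middle group and its projection (an Afin-coset A is sent to the
  Sfin-coset containing it, namely A <#> Sfin).\<close>
definition kap_ext :: "(real \<Rightarrow> real) set set \<Rightarrow> (real \<Rightarrow> real) set monoid" where
  "kap_ext G = (SX\<lparr>carrier := G_hat G\<rparr>) Mod Afin"

definition kap_proj :: "(real \<Rightarrow> real) set \<Rightarrow> (real \<Rightarrow> real) set" where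
  "kap_proj A = A <#>\<^bsub>SX\<^esub> Sfin"

definition kapoudjian_class_zero :: "(real \<Rightarrow> real) set set \<Rightarrow> bool" where
  "kapoudjian_class_zero G \<longleftrightarrow>
     (\<exists>s. s \<in> hom (PC\<lparr>carrier := G\<rparr>) (kap_ext G) \<and> (\<forall>g \<in> G. kap_proj (s g) = g))"

end

theory Submission
  imports Defs
begin

text \<open>A bijection \<open>f\<close> of \<open>X = [0,1[\<close> that is continuous off a finite set \<open>P\<close> is strictly
  monotone on each piece of \<open>X - P\<close>. Call \<open>P\<close> together with three points in each piece a test
  set for \<open>f\<close>. The parity of the number of inversions of \<open>f\<close> on a test set does not depend on the
  test set: moving points inside their pieces does not change the count, and adding a breakpoint
  \<open>c\<close> replaces the three points of its piece by seven (\<open>c\<close> and three on each side), which adds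
  \<open>4 K\<close> inversions, \<open>K\<close> being the number of points outside the piece forming an inversion with
  \<open>c\<close>, plus \<open>4 * 3 + 6\<close> more if \<open>f\<close> decreases on the piece. This parity is multiplicative: for
  a suitable test set \<open>Q\<close> of \<open>g\<close>, \<open>g ` Q\<close> is a test set of \<open>f\<close>, and the inversions of \<open>f \<circ> g\<close>
  on \<open>Q\<close> are, up to parity, those of \<open>g\<close> on \<open>Q\<close> and those of \<open>f\<close> on \<open>g ` Q\<close>. It is odd on
  transpositions, so it extends the signature of \<open>Sfin\<close>. Hence the even elements of an
  \<open>Sfin\<close>-coset form an \<open>Afin\<close>-coset, and taking them is a homomorphic section of the extension.\<close>

section \<open>Inversions\<close>

definition inverted :: "('a::linorder \<Rightarrow> 'b::linorder) \<Rightarrow> 'a \<Rightarrow> 'a \<Rightarrow> bool" where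
  "inverted f x y \<longleftrightarrow> (x < y \<and> f y < f x) \<or> (y < x \<and> f x < f y)"

definition inversions :: "('a::linorder \<Rightarrow> 'b::linorder) \<Rightarrow> 'a set \<Rightarrow> nat" where
  "inversions f Q = card {(x, y). x \<in> Q \<and> y \<in> Q \<and> x < y \<and> f y < f x}"

lemma inverted_commute: "inverted f x y \<longleftrightarrow> inverted f y x"
  unfolding inverted_def by auto

lemma inverted_irrefl [simp]: "\<not> inverted f x x"
  unfolding inverted_def by auto

lemma inversions_cong: "(\<And>x. x \<in> Q \<Longrightarrow> f x = g x) \<Longrightarrow> inversions f Q = inversions g Q"
  unfolding inversions_def by (rule arg_cong[where f = card]) auto

lemma inversions_id: "inversions id Q = 0"
proof -
  have "{(x, y). x \<in> Q \<and> y \<in> Q \<and> x < y \<and> id y < id x} = {}"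
    by auto
  then show ?thesis
    unfolding inversions_def by (simp only: card.empty)
qed

lemma inversions_insert:
  assumes "finite Q" "c \<notin> Q"
  shows "inversions f (insert c Q) = inversions f Q + card {r \<in> Q. inverted f r c}"
proof -
  let ?S = "{(x, y). x \<in> Q \<and> y \<in> Q \<and> x < y \<and> f y < f x}"
  let ?L = "{r \<in> Q. r < c \<and> f c < f r}" and ?R = "{r \<in> Q. c < r \<and> f r < f c}"
  have split: "{(x, y). x \<in> insert c Q \<and> y \<in> insert c Q \<and> x < y \<and> f y < f x}
      = ?S \<union> (\<lambda>r. (r, c)) ` ?L \<union> (\<lambda>r. (c, r)) ` ?R"
    by auto
  have "finite ?S"
    by (rule finite_subset[of _ "Q \<times> Q"]) (use assms in auto)
  then have "card (?S \<union> (\<lambda>r. (r, c)) ` ?L \<union> (\<lambda>r. (c, r)) ` ?R)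
      = card ?S + card ((\<lambda>r. (r, c)) ` ?L) + card ((\<lambda>r. (c, r)) ` ?R)"
    using assms by (subst card_Un_disjoint; auto)+
  also have "\<dots> = card ?S + (card ?L + card ?R)"
    by (simp add: card_image inj_on_def)
  also have "card ?L + card ?R = card (?L \<union> ?R)"
    by (rule card_Un_disjoint[symmetric]) (use assms in auto)
  also have "?L \<union> ?R = {r \<in> Q. inverted f r c}"
    by (auto simp: inverted_def)
  finally show ?thesis
    unfolding inversions_def split .
qed

lemma card_inverted_pairs:
  assumes "finite Q"
  shows "card {(x, y). x \<in> Q \<and> y \<in> Q \<and> inverted f x y} = 2 * inversions f Q"
proof -
  let ?S = "{(x, y). x \<in> Q \<and> y \<in> Q \<and> x < y \<and> f y < f x}"
  have split: "{(x, y). x \<in> Q \<and> y \<in> Q \<and> inverted f x y} = ?S \<union> prod.swap ` ?S"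
    by (auto simp: inverted_def)
  have "finite ?S"
    by (rule finite_subset[of _ "Q \<times> Q"]) (use assms in auto)
  then have "card (?S \<union> prod.swap ` ?S) = card ?S + card (prod.swap ` ?S)"
    by (intro card_Un_disjoint) auto
  then show ?thesis
    unfolding split inversions_def by (simp add: card_image)
qed

lemma inversions_bij_betw_eq:
  assumes "finite A" "bij_betw H A B"
    and "\<And>x y. x \<in> A \<Longrightarrow> y \<in> A \<Longrightarrow> inverted f (H x) (H y) \<longleftrightarrow> inverted f x y"
  shows "inversions f A = inversions f B"
proof -
  let ?I = "\<lambda>A. {(x, y). x \<in> A \<and> y \<in> A \<and> inverted f x y}"
  have "(\<lambda>(x, y). (H x, H y)) ` ?I A = ?I B"
    using assms(2,3) by (fastforce simp: bij_betw_def)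
  moreover have "inj_on (\<lambda>(x, y). (H x, H y)) (?I A)"
    using assms(2) by (auto simp: bij_betw_def inj_on_def)
  moreover have "finite B"
    using assms(1,2) bij_betw_finite by blast
  ultimately show ?thesis
    using card_image card_inverted_pairs[of A f] card_inverted_pairs[of B f] assms(1) by fastforce
qed

lemma inversions_transpose:
  assumes "a < b" "finite Q" "a \<in> Q" "b \<in> Q"
  shows "inversions (Transposition.transpose a b) Q = 1 + 2 * card {z \<in> Q. a < z \<and> z < b}"
proof -
  let ?Z = "{z \<in> Q. a < z \<and> z < b}"
  have "{(x, y). x \<in> Q \<and> y \<in> Q \<and> x < y \<and> Transposition.transpose a b y < Transposition.transpose a b x}
      = insert (a, b) (Pair a ` ?Z \<union> (\<lambda>z. (z, b)) ` ?Z)"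
    using assms(1,3,4) by (auto simp: Transposition.transpose_def split: if_splits)
  moreover have "card (Pair a ` ?Z \<union> (\<lambda>z. (z, b)) ` ?Z) = card ?Z + card ?Z"
    using assms(2) by (subst card_Un_disjoint) (auto simp: card_image inj_on_def)
  moreover have "finite (Pair a ` ?Z \<union> (\<lambda>z. (z, b)) ` ?Z)" "(a, b) \<notin> Pair a ` ?Z \<union> (\<lambda>z. (z, b)) ` ?Z"
    using assms(2) by auto
  ultimately show ?thesis
    unfolding inversions_def by (simp add: card_insert_disjoint)
qed

lemma even_card_sym_diff:
  assumes "finite A" "finite B"
  shows "even (card (sym_diff A B)) \<longleftrightarrow> (even (card A) \<longleftrightarrow> even (card B))"
proof -
  have "card (sym_diff A B) + card (A \<inter> B) = card (A \<union> B)"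
    by (subst card_Un_disjoint[symmetric]) (use assms in \<open>auto intro: arg_cong[where f = card]\<close>)
  moreover have "card (A \<union> B) + card (A \<inter> B) = card A + card B"
    using card_Un_Int[OF assms] by simp
  ultimately show ?thesis
    by presburger
qed

lemma inj_on_sorted_pair:
  fixes g :: "'a::linorder \<Rightarrow> 'b::linorder"
  assumes "inj_on g Q"
  shows "inj_on (\<lambda>(x, y). (min (g x) (g y), max (g x) (g y))) {(x, y). x \<in> Q \<and> y \<in> Q \<and> x < y}"
proof (rule inj_onI, clarify)
  fix x y x' y'
  assume xy: "x \<in> Q" "y \<in> Q" "x < y" "x' \<in> Q" "y' \<in> Q" "x' < y'"
    and eq: "min (g x) (g y) = min (g x') (g y')" "max (g x) (g y) = max (g x') (g y')"
  have "g x \<noteq> g y" "g x' \<noteq> g y'"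
    using assms xy by (auto dest: inj_onD)
  then have "(g x = g x' \<and> g y = g y') \<or> (g x = g y' \<and> g y = g x')"
    using eq by (auto simp: min_def max_def split: if_splits)
  then have "(x = x' \<and> y = y') \<or> (x = y' \<and> y = x')"
    using assms xy by (auto dest: inj_onD)
  then show "x = x' \<and> y = y'"
    using xy by auto
qed

text \<open>The pairs inverted by exactly one of \<open>g\<close> and \<open>f \<circ> g\<close> correspond, through \<open>g\<close>, to the
  pairs of \<open>g ` Q\<close> inverted by \<open>f\<close>.\<close>

lemma even_inversions_comp:
  assumes "finite Q" "inj_on g Q" "inj_on h Q" "\<And>x. x \<in> Q \<Longrightarrow> h x = f (g x)"
  shows "even (inversions h Q) \<longleftrightarrow> (even (inversions g Q) \<longleftrightarrow> even (inversions f (g ` Q)))"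
proof -
  let ?A = "{(x, y). x \<in> Q \<and> y \<in> Q \<and> x < y \<and> g y < g x}"
  let ?B = "{(x, y). x \<in> Q \<and> y \<in> Q \<and> x < y \<and> h y < h x}"
  let ?C = "{(u, v). u \<in> g ` Q \<and> v \<in> g ` Q \<and> u < v \<and> f v < f u}"
  let ?sort = "\<lambda>(x, y). (min (g x) (g y), max (g x) (g y))"
  have fin: "finite ?A" "finite ?B"
    by (rule finite_subset[of _ "Q \<times> Q"], use assms in auto)+
  have gne: "g x \<noteq> g y" "h x \<noteq> h y" if "x \<in> Q" "y \<in> Q" "x \<noteq> y" for x y
    using assms(2,3) that by (auto dest: inj_onD)
  have "sym_diff ?A ?B \<subseteq> {(x, y). x \<in> Q \<and> y \<in> Q \<and> x < y}"
    by auto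
  then have "inj_on ?sort (sym_diff ?A ?B)"
    by (rule inj_on_subset[OF inj_on_sorted_pair[OF assms(2)]])
  moreover have "?sort ` sym_diff ?A ?B = ?C"
  proof (intro equalityI subsetI)
    fix z assume "z \<in> ?sort ` sym_diff ?A ?B"
    then obtain x y where z: "z = ?sort (x, y)" and xy: "(x, y) \<in> sym_diff ?A ?B"
      by blast
    then have "x \<in> Q" "y \<in> Q" "x < y"
      by auto
    moreover have "g x \<noteq> g y" "h x \<noteq> h y" "h x = f (g x)" "h y = f (g y)"
      using gne[of x y] assms(4) \<open>x \<in> Q\<close> \<open>y \<in> Q\<close> \<open>x < y\<close> by auto
    ultimately show "z \<in> ?C"
      using xy unfolding z by (auto simp: min_def max_def)
  next
    fix z assume "z \<in> ?C"
    then obtain x y where z: "z = (g x, g y)" "x \<in> Q" "y \<in> Q" "g x < g y" "f (g y) < f (g x)"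
      by auto
    then have "x \<noteq> y" by auto
    then consider "x < y" | "y < x" by (meson linorder_neqE)
    then show "z \<in> ?sort ` sym_diff ?A ?B"
    proof cases
      case 1
      then show ?thesis using z assms(4) by (auto intro!: image_eqI[where x = "(x, y)"])
    next
      case 2
      then show ?thesis using z assms(4) by (auto intro!: image_eqI[where x = "(y, x)"])
    qed
  qed
  ultimately have "card ?C = card (sym_diff ?A ?B)"
    using card_image by fastforce
  then have "even (card ?C) \<longleftrightarrow> (even (card ?A) \<longleftrightarrow> even (card ?B))"
    using even_card_sym_diff[OF fin] by simp
  then show ?thesis
    unfolding inversions_def by blast
qed

section \<open>Pieces\<close>

lemma mem_XX_iff: "x \<in> XX \<longleftrightarrow> 0 \<le> x \<and> x < 1"
  by (simp add: XX_def)

definition same_piece :: "real set \<Rightarrow> real \<Rightarrow> real \<Rightarrow> bool" where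
  "same_piece P x y \<longleftrightarrow> x \<in> XX \<and> y \<in> XX \<and> (\<forall>p\<in>P. \<not> (min x y \<le> p \<and> p \<le> max x y))"

definition piece :: "real set \<Rightarrow> real \<Rightarrow> real set" where
  "piece P x = {y. same_piece P x y}"

lemma same_piece_commute: "same_piece P x y \<longleftrightarrow> same_piece P y x"
  unfolding same_piece_def by (auto simp: min_def max_def)

lemma same_pieceD: "same_piece P x y \<Longrightarrow> x \<notin> P \<and> y \<notin> P \<and> x \<in> XX \<and> y \<in> XX"
  unfolding same_piece_def by (metis max.cobounded1 max.cobounded2 min.cobounded1 min.cobounded2)

lemma same_piece_refl: "x \<in> XX - P \<Longrightarrow> same_piece P x x"
  unfolding same_piece_def by auto

lemma same_piece_trans: "same_piece P x y \<Longrightarrow> same_piece P y z \<Longrightarrow> same_piece P x z"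
  unfolding same_piece_def by (smt (verit, best))

lemma same_piece_between:
  assumes "same_piece P x y" "min x y \<le> z" "z \<le> max x y"
  shows "same_piece P x z"
  using assms unfolding same_piece_def mem_XX_iff by (auto simp: min_def max_def split: if_splits)

lemma same_piece_insert:
  "same_piece (insert c P) x y \<longleftrightarrow> same_piece P x y \<and> \<not> (min x y \<le> c \<and> c \<le> max x y)"
  unfolding same_piece_def by auto

lemma mem_piece_self: "x \<in> XX - P \<Longrightarrow> x \<in> piece P x"
  unfolding piece_def using same_piece_refl by simp

lemma piece_eq: "same_piece P x y \<Longrightarrow> piece P x = piece P y"
  unfolding piece_def using same_piece_trans same_piece_commute by blast

lemma piece_disjoint:
  assumes "x \<notin> piece P c"
  shows "piece P x \<inter> piece P c = {}"
proof (rule ccontr)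
  assume "piece P x \<inter> piece P c \<noteq> {}"
  then obtain z where "same_piece P x z" "same_piece P c z"
    unfolding piece_def by auto
  then have "x \<in> piece P c"
    using same_piece_trans same_piece_commute unfolding piece_def by blast
  with assms show False ..
qed

lemma piece_subset: "piece P x \<subseteq> XX - P"
  unfolding piece_def using same_pieceD by blast

lemma is_interval_piece: "is_interval (piece P x)"
  unfolding is_interval_1 piece_def
proof (intro ballI allI impI, elim conjE)
  fix a b c assume a: "a \<in> {y. same_piece P x y}" "b \<in> {y. same_piece P x y}" "a \<le> c" "c \<le> b"
  then have "same_piece P a b"
    using same_piece_trans same_piece_commute by blast
  then have "same_piece P a c"
    using same_piece_between a by (auto simp: min_def max_def)
  then show "c \<in> {y. same_piece P x y}"
    using a same_piece_trans by blast
qed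

text \<open>Requiring \<open>0 \<in> P\<close> makes every piece an interval \<open>]p, q[\<close> with \<open>p \<in> P\<close>.\<close>

definition breakpoints :: "(real \<Rightarrow> real) \<Rightarrow> real set \<Rightarrow> bool" where
  "breakpoints f P \<longleftrightarrow> finite P \<and> P \<subseteq> XX \<and> 0 \<in> P \<and> (\<forall>x\<in>XX - P. continuous (at x within XX) f)"

lemma breakpoints_mono:
  assumes "breakpoints f P" "P \<subseteq> Q" "finite Q" "Q \<subseteq> XX"
  shows "breakpoints f Q"
  using assms unfolding breakpoints_def by auto

lemma breakpoints_insert: "breakpoints f P \<Longrightarrow> c \<in> XX \<Longrightarrow> breakpoints f (insert c P)"
  unfolding breakpoints_def by auto

lemma continuous_on_piece:
  assumes "breakpoints f P"
  shows "continuous_on (piece P x) f"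
  unfolding continuous_on_eq_continuous_within
proof
  fix t assume "t \<in> piece P x"
  then have "continuous (at t within XX) f"
    using piece_subset assms unfolding breakpoints_def by blast
  then show "continuous (at t within piece P x) f"
    using continuous_within_subset piece_subset by blast
qed

lemma piece_IVT:
  assumes "breakpoints f P" "same_piece P a b" "min (f a) (f b) \<le> z" "z \<le> max (f a) (f b)"
  shows "\<exists>t. min a b \<le> t \<and> t \<le> max a b \<and> f t = z"
proof -
  have "{min a b..max a b} \<subseteq> piece P a"
    using same_piece_between[OF assms(2)] unfolding piece_def by auto
  then have "connected (f ` {min a b..max a b})"
    by (intro connected_continuous_image continuous_on_subset[OF continuous_on_piece[OF assms(1)]]) auto
  then have iv: "is_interval (f ` {min a b..max a b})"
    using is_interval_connected_1 by blast
  have ab: "f a \<in> f ` {min a b..max a b}" "f b \<in> f ` {min a b..max a b}"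
    by auto
  have "z \<in> f ` {min a b..max a b}"
  proof (cases "f a \<le> f b")
    case True
    then show ?thesis
      using mem_is_interval_1_I[OF iv ab(1) ab(2)] assms(3,4) by (auto simp: min_def max_def)
  next
    case False
    then show ?thesis
      using mem_is_interval_1_I[OF iv ab(2) ab(1)] assms(3,4) by (auto simp: min_def max_def)
  qed
  then show ?thesis
    by auto
qed

definition decreasing_on_piece :: "(real \<Rightarrow> real) \<Rightarrow> real set \<Rightarrow> real \<Rightarrow> bool" where
  "decreasing_on_piece f P x \<longleftrightarrow> strict_antimono_on (piece P x) f"

lemma strict_mono_or_antimono_on_piece:
  assumes "breakpoints f P" "inj_on f XX"
  shows "strict_mono_on (piece P x) f \<or> strict_antimono_on (piece P x) f"
  using injective_eq_monotone_map[OF is_interval_piece continuous_on_piece[OF assms(1)]]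
    inj_on_subset[OF assms(2)] piece_subset by blast

lemma inverted_within_piece:
  assumes "breakpoints f P" "inj_on f XX" "same_piece P x y" "same_piece P x z" "y \<noteq> z"
  shows "inverted f y z \<longleftrightarrow> decreasing_on_piece f P x"
proof -
  have yz: "y \<in> piece P x" "z \<in> piece P x"
    using assms unfolding piece_def by auto
  consider "strict_mono_on (piece P x) f" | "strict_antimono_on (piece P x) f"
    using strict_mono_or_antimono_on_piece[OF assms(1,2)] by blast
  then show ?thesis
  proof cases
    case 1
    then have "\<not> inverted f y z"
      using yz unfolding strict_mono_on_def inverted_def by (metis less_asym)
    moreover have "\<not> strict_antimono_on (piece P x) f"
      using 1 yz assms(5) unfolding strict_mono_on_def monotone_on_def
      by (metis less_asym linorder_neq_iff)
    ultimately show ?thesis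
      unfolding decreasing_on_piece_def by simp
  next
    case 2
    then have "inverted f y z"
      using yz assms(5) unfolding monotone_on_def inverted_def by (metis linorder_neq_iff)
    then show ?thesis
      using 2 unfolding decreasing_on_piece_def by simp
  qed
qed

text \<open>By the intermediate value theorem and injectivity, \<open>f r\<close> cannot lie between the values of
  \<open>f\<close> on a piece not containing \<open>r\<close>.\<close>

lemma inverted_across_piece:
  assumes "breakpoints f P" "inj_on f XX" "same_piece P m m'" "r \<in> XX" "\<not> same_piece P m r"
  shows "inverted f r m \<longleftrightarrow> inverted f r m'"
proof -
  have mm: "m \<in> XX" "m' \<in> XX"
    using same_pieceD[OF assms(3)] by auto
  have nb: "\<not> (min m m' \<le> r \<and> r \<le> max m m')"
    using same_piece_between[OF assms(3)] assms(5) by blast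
  have fnb: "\<not> (min (f m) (f m') \<le> f r \<and> f r \<le> max (f m) (f m'))"
  proof
    assume "min (f m) (f m') \<le> f r \<and> f r \<le> max (f m) (f m')"
    then obtain t where t: "min m m' \<le> t" "t \<le> max m m'" "f t = f r"
      using piece_IVT[OF assms(1,3)] by blast
    have "t \<in> XX"
      using t mm unfolding mem_XX_iff by (auto simp: min_def max_def split: if_splits)
    then have "t = r"
      using assms(2,4) t(3) by (auto dest: inj_onD)
    then show False
      using nb t by auto
  qed
  then show ?thesis
    using nb unfolding inverted_def by (auto simp: min_def max_def split: if_splits)
qed

lemma inverted_move_within_pieces:
  assumes bp: "breakpoints f P" and inj: "inj_on f XX" and XY: "x \<in> XX" "y \<in> XX"
    and x': "x' = x \<or> same_piece P x x'" and y': "y' = y \<or> same_piece P y y'"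
    and ne: "x \<noteq> y" "x' \<noteq> y'"
  shows "inverted f x' y' \<longleftrightarrow> inverted f x y"
proof (cases "same_piece P x y")
  case True
  then have "x \<in> XX - P" "y \<in> XX - P"
    using same_pieceD by auto
  then have "same_piece P x x" "same_piece P x x'" "same_piece P x y'"
    using True x' y' same_piece_refl same_piece_trans by blast+
  then show ?thesis
    using inverted_within_piece[OF bp inj] True ne by metis
next
  case False
  have "y' \<in> XX"
    using y' XY(2) same_pieceD by blast
  have "inverted f x y \<longleftrightarrow> inverted f x y'"
  proof (cases "y' = y")
    case False
    then have "same_piece P y y'"
      using y' by blast
    moreover have "\<not> same_piece P y x"
      using \<open>\<not> same_piece P x y\<close> same_piece_commute by blast
    ultimately show ?thesis
      using inverted_across_piece[OF bp inj _ XY(1)] by blast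
  qed simp
  also have "\<dots> \<longleftrightarrow> inverted f x' y'"
  proof (cases "x' = x")
    case False
    then have "same_piece P x x'"
      using x' by blast
    moreover have "\<not> same_piece P x y'"
      using \<open>\<not> same_piece P x y\<close> y' same_piece_trans same_piece_commute by metis
    ultimately show ?thesis
      using inverted_across_piece[OF bp inj _ \<open>y' \<in> XX\<close>] inverted_commute by metis
  qed simp
  finally show ?thesis ..
qed

lemma inversions_move_within_pieces:
  assumes bp: "breakpoints f P" and inj: "inj_on f XX"
    and M: "finite M" "M \<subseteq> XX - P" "M' \<subseteq> XX - P"
    and h: "bij_betw h M M'" "\<And>m. m \<in> M \<Longrightarrow> same_piece P m (h m)"
  shows "inversions f (P \<union> M) = inversions f (P \<union> M')"
proof -
  define H where "H x = (if x \<in> M then h x else x)" for x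
  have bij: "bij_betw H (M \<union> P) (M' \<union> P)"
    unfolding H_def using M by (intro bij_betw_disjoint_Un h(1)) (auto simp: bij_betw_def)
  have "inverted f (H x) (H y) \<longleftrightarrow> inverted f x y" if xy: "x \<in> M \<union> P" "y \<in> M \<union> P" for x y
  proof (cases "x = y")
    case False
    then have "H x \<noteq> H y"
      using bij xy by (auto simp: bij_betw_def dest: inj_onD)
    moreover have "H z = z \<or> same_piece P z (H z)" for z
      using h(2) unfolding H_def by auto
    moreover have "x \<in> XX" "y \<in> XX"
      using xy M bp unfolding breakpoints_def by auto
    ultimately show ?thesis
      using inverted_move_within_pieces[OF bp inj] False by blast
  qed simp
  then have "inversions f (M \<union> P) = inversions f (M' \<union> P)"
    using M bp by (intro inversions_bij_betw_eq[OF _ bij]) (auto simp: breakpoints_def)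
  then show ?thesis
    by (simp add: Un_commute)
qed

lemma disjoint_family_on_pieces: "disjoint_family_on (\<lambda>C. N \<inter> C) (piece P ` (XX - P))"
  unfolding disjoint_family_on_def
proof (intro ballI impI)
  fix C D assume "C \<in> piece P ` (XX - P)" "D \<in> piece P ` (XX - P)" "C \<noteq> D"
  then obtain x y where "C = piece P x" "D = piece P y" "C \<noteq> D"
    by blast
  moreover have "x \<notin> piece P y"
    using piece_eq[of P y x] calculation unfolding piece_def by auto
  ultimately show "N \<inter> C \<inter> (N \<inter> D) = {}"
    using piece_disjoint[of x P y] by auto
qed

lemma UN_inter_pieces:
  assumes "N \<subseteq> XX - P"
  shows "(\<Union>C\<in>piece P ` (XX - P). N \<inter> C) = N"
proof
  show "N \<subseteq> (\<Union>C\<in>piece P ` (XX - P). N \<inter> C)"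
  proof
    fix n assume "n \<in> N"
    then have "n \<in> N \<inter> piece P n" "piece P n \<in> piece P ` (XX - P)"
      using assms mem_piece_self by auto
    then show "n \<in> (\<Union>C\<in>piece P ` (XX - P). N \<inter> C)"
      by blast
  qed
qed blast

lemma bij_within_pieces:
  assumes M: "finite M" "M \<subseteq> XX - P" "M' \<subseteq> XX - P"
    and card: "\<And>x. x \<in> XX - P \<Longrightarrow> card (M \<inter> piece P x) = card (M' \<inter> piece P x)"
    and fin: "\<And>x. x \<in> XX - P \<Longrightarrow> finite (M' \<inter> piece P x)"
  obtains h where "bij_betw h M M'" "\<And>m. m \<in> M \<Longrightarrow> same_piece P m (h m)"
proof -
  let ?pieces = "piece P ` (XX - P)"
  define b where "b C = (SOME b. bij_betw b (M \<inter> C) (M' \<inter> C))" for C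
  define h where "h m = b (piece P m) m" for m
  have bij: "bij_betw h (M \<inter> C) (M' \<inter> C)" if C: "C \<in> ?pieces" for C
  proof -
    obtain x where x: "x \<in> XX - P" "C = piece P x"
      using C by auto
    have "\<exists>b. bij_betw b (M \<inter> C) (M' \<inter> C)"
      using card[OF x(1)] fin[OF x(1)] M(1) x(2) by (intro finite_same_card_bij) auto
    then have "bij_betw (b C) (M \<inter> C) (M' \<inter> C)"
      unfolding b_def by (rule someI_ex)
    moreover have "h m = b C m" if "m \<in> M \<inter> C" for m
    proof -
      have "piece P m = C"
        using that x piece_eq[of P x m] unfolding piece_def by auto
      then show ?thesis
        by (simp add: h_def)
    qed
    ultimately show ?thesis
      using bij_betw_cong by blast
  qed
  have "bij_betw h (\<Union>C\<in>?pieces. M \<inter> C) (\<Union>C\<in>?pieces. M' \<inter> C)"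
    by (rule bij_betw_UNION_disjoint[OF disjoint_family_on_pieces bij])
  then have "bij_betw h M M'"
    unfolding UN_inter_pieces[OF M(2)] UN_inter_pieces[OF M(3)] .
  moreover have "same_piece P m (h m)" if "m \<in> M" for m
  proof -
    have "m \<in> M \<inter> piece P m" "piece P m \<in> ?pieces"
      using that M(2) mem_piece_self by auto
    then have "h m \<in> M' \<inter> piece P m"
      using bij_betw_apply[OF bij] by blast
    then show ?thesis
      unfolding piece_def by simp
  qed
  ultimately show ?thesis
    using that by blast
qed

definition three_per_piece :: "real set \<Rightarrow> real set \<Rightarrow> bool" where
  "three_per_piece P M \<longleftrightarrow> finite M \<and> M \<subseteq> XX - P \<and> (\<forall>x\<in>XX - P. card (M \<inter> piece P x) = 3)"

lemma inversions_three_per_piece_eq: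
  assumes "breakpoints f P" "inj_on f XX" "three_per_piece P M" "three_per_piece P M'"
  shows "inversions f (P \<union> M) = inversions f (P \<union> M')"
proof -
  have M: "finite M" "M \<subseteq> XX - P" "M' \<subseteq> XX - P"
    and card: "\<And>x. x \<in> XX - P \<Longrightarrow> card (M \<inter> piece P x) = 3 \<and> card (M' \<inter> piece P x) = 3"
    using assms(3,4) unfolding three_per_piece_def by auto
  then obtain h where "bij_betw h M M'" "\<And>m. m \<in> M \<Longrightarrow> same_piece P m (h m)"
    using bij_within_pieces[OF M] card_ge_0_finite by (metis zero_less_numeral)
  then show ?thesis
    using inversions_move_within_pieces[OF assms(1,2) M] by blast
qed

definition prev_break :: "real set \<Rightarrow> real \<Rightarrow> real" where
  "prev_break P x = Max {p \<in> P. p < x}"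

definition next_break :: "real set \<Rightarrow> real \<Rightarrow> real" where
  "next_break P x = Min (insert 1 {p \<in> P. x < p})"

definition gap :: "real set \<Rightarrow> real \<Rightarrow> real set" where
  "gap P p = {p<..<next_break P p}"

lemma prev_break_props:
  assumes "finite P" "0 \<in> P" "0 < x"
  shows "prev_break P x \<in> P" "prev_break P x < x" "\<And>p. p \<in> P \<Longrightarrow> p < x \<Longrightarrow> p \<le> prev_break P x"
proof -
  have "finite {p \<in> P. p < x}" "{p \<in> P. p < x} \<noteq> {}"
    using assms by auto
  then show "prev_break P x \<in> P" "prev_break P x < x" "\<And>p. p \<in> P \<Longrightarrow> p < x \<Longrightarrow> p \<le> prev_break P x"
    unfolding prev_break_def using Max_in Max_ge by auto
qed

lemma next_break_props:
  assumes "finite P"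
  shows "next_break P x \<in> insert 1 P" "next_break P x \<le> 1" "\<And>p. p \<in> P \<Longrightarrow> x < p \<Longrightarrow> next_break P x \<le> p"
  unfolding next_break_def using assms Min_in[of "insert 1 {p \<in> P. x < p}"] by auto

lemma lt_next_break: "finite P \<Longrightarrow> x < 1 \<Longrightarrow> x < next_break P x"
  unfolding next_break_def by (subst Min_gr_iff) auto

lemma pos_if_not_break: "0 \<in> P \<Longrightarrow> x \<in> XX - P \<Longrightarrow> 0 < x"
  unfolding mem_XX_iff by (metis DiffE mem_XX_iff less_eq_real_def)

lemma piece_gap:
  assumes "finite P" "P \<subseteq> XX" "p \<in> P" "y \<in> gap P p"
  shows "piece P y = gap P p"
proof -
  let ?q = "next_break P p"
  have y: "p < y" "y < ?q"
    using assms(4) unfolding gap_def by auto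
  have "0 \<le> p" "?q \<le> 1"
    using assms(2,3) next_break_props(2)[OF assms(1)] mem_XX_iff by blast+
  have no_break: "r \<notin> P" if "p < r" "r < ?q" for r
    using next_break_props(3)[OF assms(1)] that by force
  show ?thesis
  proof (intro equalityI subsetI)
    fix z assume z: "z \<in> piece P y"
    then have yz: "same_piece P y z" "z < 1"
      unfolding piece_def by (auto dest: same_pieceD simp: mem_XX_iff)
    have "p < z"
    proof (rule ccontr)
      assume "\<not> p < z"
      then show False
        using yz(1) y assms(3) unfolding same_piece_def by force
    qed
    moreover have "z < ?q"
    proof (rule ccontr)
      assume "\<not> z < ?q"
      then have "?q \<in> P"
        using next_break_props(1)[OF assms(1), of p] yz(2) by auto
      then show False
        using yz(1) y \<open>\<not> z < ?q\<close> unfolding same_piece_def by force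
    qed
    ultimately show "z \<in> gap P p"
      unfolding gap_def by simp
  next
    fix z assume "z \<in> gap P p"
    then have z: "p < z" "z < ?q"
      unfolding gap_def by auto
    have "\<not> (min y z \<le> r \<and> r \<le> max y z)" if "r \<in> P" for r
      using no_break[of r] that y z by (auto simp: min_def max_def)
    then show "z \<in> piece P y"
      using y z \<open>0 \<le> p\<close> \<open>?q \<le> 1\<close> unfolding piece_def same_piece_def mem_XX_iff by auto
  qed
qed

lemma gap_subset: "finite P \<Longrightarrow> P \<subseteq> XX \<Longrightarrow> p \<in> P \<Longrightarrow> gap P p \<subseteq> XX - P"
  using piece_gap piece_subset mem_piece_self by blast

lemma gap_nonempty:
  assumes "finite P" "P \<subseteq> XX" "p \<in> P"
  shows "gap P p \<noteq> {}"
proof -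
  have "p < 1"
    using assms(2,3) mem_XX_iff by blast
  then show ?thesis
    using lt_next_break[OF assms(1), of p] unfolding gap_def by simp
qed

lemma prev_break_mem: "finite P \<Longrightarrow> 0 \<in> P \<Longrightarrow> x \<in> XX - P \<Longrightarrow> prev_break P x \<in> P"
  using prev_break_props(1) pos_if_not_break by blast

lemma prev_break_gap:
  assumes "finite P" "p \<in> P" "y \<in> gap P p"
  shows "prev_break P y = p"
  unfolding prev_break_def
proof (rule Max_eqI)
  show "finite {q \<in> P. q < y}"
    using assms(1) by simp
  show "p \<in> {q \<in> P. q < y}"
    using assms(2,3) unfolding gap_def by simp
  fix q assume "q \<in> {q \<in> P. q < y}"
  then show "q \<le> p"
    using next_break_props(3)[OF assms(1), where x = p] assms(3) unfolding gap_def by force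
qed

lemma mem_gap_prev_break:
  assumes "finite P" "0 \<in> P" "x \<in> XX - P"
  shows "x \<in> gap P (prev_break P x)"
proof -
  note prev = prev_break_props[OF assms(1,2) pos_if_not_break[OF assms(2,3)]]
  have "x < next_break P (prev_break P x)"
    unfolding next_break_def
  proof (subst Min_gr_iff)
    show "\<forall>q\<in>insert 1 {q \<in> P. prev_break P x < q}. x < q"
    proof
      fix q assume q: "q \<in> insert 1 {q \<in> P. prev_break P x < q}"
      show "x < q"
      proof (cases "q = 1")
        case False
        then have "q \<in> P" "\<not> q < x"
          using q prev(3)[of q] by auto
        then show ?thesis
          using assms(3) by (cases "q = x") auto
      qed (use assms(3) mem_XX_iff in auto)
    qed
  qed (use assms in auto)
  then show ?thesis
    using prev(2) unfolding gap_def by simp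
qed

lemma piece_eq_gap:
  assumes "finite P" "0 \<in> P" "P \<subseteq> XX" "x \<in> XX - P"
  shows "piece P x = gap P (prev_break P x)"
  using piece_gap[OF assms(1,3) prev_break_mem[OF assms(1,2,4)] mem_gap_prev_break[OF assms(1,2,4)]] .

lemma same_piece_iff_prev_break:
  assumes "finite P" "0 \<in> P" "P \<subseteq> XX" "x \<in> XX - P" "y \<in> XX - P"
  shows "same_piece P x y \<longleftrightarrow> prev_break P x = prev_break P y"
proof
  assume "same_piece P x y"
  then have "y \<in> gap P (prev_break P x)"
    using piece_eq_gap[OF assms(1-4)] unfolding piece_def by blast
  then show "prev_break P x = prev_break P y"
    using prev_break_gap[OF assms(1) prev_break_mem[OF assms(1,2,4)]] by simp
next
  assume "prev_break P x = prev_break P y"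
  then have "y \<in> piece P x"
    using mem_gap_prev_break[OF assms(1,2,5)] piece_eq_gap[OF assms(1-4)] by simp
  then show "same_piece P x y"
    unfolding piece_def by simp
qed

lemma three_per_piece_exists:
  assumes "finite P" "0 \<in> P" "P \<subseteq> XX"
  shows "\<exists>M. three_per_piece P M"
proof -
  have "\<exists>T. finite T \<and> card T = 3 \<and> T \<subseteq> gap P p" if "p \<in> P" for p
  proof (rule infinite_arbitrarily_large)
    have "p < 1"
      using that assms(3) mem_XX_iff by blast
    then show "infinite (gap P p)"
      using lt_next_break[OF assms(1)] unfolding gap_def by simp
  qed
  then obtain T where T: "\<And>p. p \<in> P \<Longrightarrow> T p \<subseteq> gap P p \<and> finite (T p) \<and> card (T p) = 3"
    by metis
  define M where "M = (\<Union>p\<in>P. T p)"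
  have "M \<inter> piece P x = T (prev_break P x)" if x: "x \<in> XX - P" for x
  proof -
    have a: "prev_break P x \<in> P" "piece P x = gap P (prev_break P x)"
      using prev_break_mem[OF assms(1,2) x] piece_eq_gap[OF assms x] by auto
    have "m \<in> T (prev_break P x)" if "m \<in> T p" "p \<in> P" "m \<in> gap P (prev_break P x)" for m p
      using that T prev_break_gap[OF assms(1)] a(1) by (metis subsetD)
    then show ?thesis
      using T a unfolding M_def by blast
  qed
  moreover have "finite M" "M \<subseteq> XX - P"
    using T gap_subset[OF assms(1,3)] assms(1) unfolding M_def by blast+
  ultimately have "three_per_piece P M"
    unfolding three_per_piece_def using T prev_break_mem[OF assms(1,2)] by simp
  then show ?thesis ..
qed

lemma piece_insert_other:
  assumes "x \<notin> piece P c"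
  shows "piece (insert c P) x = piece P x"
proof -
  have "\<not> (min x y \<le> c \<and> c \<le> max x y)" if "same_piece P x y" for y
    using same_piece_between[OF that, of c] assms same_piece_commute unfolding piece_def by auto
  then show ?thesis
    unfolding piece_def same_piece_insert by auto
qed

lemma piece_insert_below:
  assumes "x \<in> piece P c" "x < c"
  shows "piece (insert c P) x = piece P c \<inter> {..<c}"
proof -
  have "piece P x = piece P c"
    using assms(1) piece_eq unfolding piece_def by auto
  moreover have "\<not> (min x y \<le> c \<and> c \<le> max x y) \<longleftrightarrow> y < c" for y
    using assms(2) by (auto simp: min_def max_def)
  ultimately show ?thesis
    unfolding piece_def same_piece_insert by auto
qed

lemma piece_insert_above:
  assumes "x \<in> piece P c" "c < x"
  shows "piece (insert c P) x = piece P c \<inter> {c<..}"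
proof -
  have "piece P x = piece P c"
    using assms(1) piece_eq unfolding piece_def by auto
  moreover have "\<not> (min x y \<le> c \<and> c \<le> max x y) \<longleftrightarrow> c < y" for y
    using assms(2) by (auto simp: min_def max_def)
  ultimately show ?thesis
    unfolding piece_def same_piece_insert by auto
qed

lemma inter_piece_replace:
  assumes "U \<subseteq> piece P c"
  shows "(M - piece P c \<union> U) \<inter> piece P x = (if x \<in> piece P c then U else M \<inter> piece P x)"
proof (cases "x \<in> piece P c")
  case True
  then have "piece P x = piece P c"
    using piece_eq unfolding piece_def by auto
  with True show ?thesis
    using assms by auto
next
  case False
  with piece_disjoint[OF False] show ?thesis
    using assms by auto
qed

lemma three_per_piece_replace:
  assumes M: "three_per_piece P M" and U: "finite U" "U \<subseteq> piece P c" "card U = 3"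
  shows "three_per_piece P (M - piece P c \<union> U)"
  unfolding three_per_piece_def
proof (intro conjI ballI)
  show "finite (M - piece P c \<union> U)"
    using M U unfolding three_per_piece_def by blast
  show "M - piece P c \<union> U \<subseteq> XX - P"
    using M U piece_subset unfolding three_per_piece_def by blast
next
  fix x assume "x \<in> XX - P"
  then show "card ((M - piece P c \<union> U) \<inter> piece P x) = 3"
    using M U(3) unfolding inter_piece_replace[OF U(2)] three_per_piece_def by simp
qed

lemma three_per_piece_split:
  assumes M: "three_per_piece P M"
    and U: "finite U" "U \<subseteq> piece P c \<inter> {..<c}" "card U = 3"
    and V: "finite V" "V \<subseteq> piece P c \<inter> {c<..}" "card V = 3"
  shows "three_per_piece (insert c P) (M - piece P c \<union> U \<union> V)"
  unfolding three_per_piece_def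
proof (intro conjI ballI)
  show "finite (M - piece P c \<union> U \<union> V)"
    using M U V unfolding three_per_piece_def by blast
  have "c \<notin> M - piece P c"
    using M mem_piece_self unfolding three_per_piece_def by blast
  then show "M - piece P c \<union> U \<union> V \<subseteq> XX - insert c P"
    using M U V piece_subset unfolding three_per_piece_def by blast
next
  fix x assume x: "x \<in> XX - insert c P"
  let ?M = "M - piece P c \<union> U \<union> V"
  consider "x \<in> piece P c" "x < c" | "x \<in> piece P c" "c < x" | "x \<notin> piece P c"
    using x by fastforce
  then show "card (?M \<inter> piece (insert c P) x) = 3"
  proof cases
    case 1
    then have "?M \<inter> piece (insert c P) x = U"
      unfolding piece_insert_below[OF 1] using U V by auto
    then show ?thesis
      using U by simp
  next
    case 2
    then have "?M \<inter> piece (insert c P) x = V"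
      unfolding piece_insert_above[OF 2] using U V by auto
    then show ?thesis
      using V by simp
  next
    case 3
    then have "?M \<inter> piece (insert c P) x = M \<inter> piece P x"
      unfolding piece_insert_other[OF 3] using U V piece_disjoint[OF 3] by auto
    then show ?thesis
      using M x unfolding three_per_piece_def by simp
  qed
qed

lemma card_inverted_piece_point:
  assumes bp: "breakpoints f P" and inj: "inj_on f XX" and x: "x \<in> piece P c"
    and S: "finite S" "S \<subseteq> XX" "x \<notin> S"
  shows "card {r \<in> S. inverted f r x} = card {r \<in> S - piece P c. inverted f r c}
           + (if decreasing_on_piece f P c then card (S \<inter> piece P c) else 0)"
proof -
  have cx: "same_piece P c x"
    using x unfolding piece_def by simp
  have "{r \<in> S - piece P c. inverted f r x} = {r \<in> S - piece P c. inverted f r c}"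
  proof -
    have "inverted f r c \<longleftrightarrow> inverted f r x" if "r \<in> S" "r \<notin> piece P c" for r
      using inverted_across_piece[OF bp inj cx] that S(2) unfolding piece_def by auto
    then show ?thesis
      by blast
  qed
  moreover have "{r \<in> S \<inter> piece P c. inverted f r x}
      = (if decreasing_on_piece f P c then S \<inter> piece P c else {})"
  proof -
    have "inverted f r x \<longleftrightarrow> decreasing_on_piece f P c" if "r \<in> S \<inter> piece P c" for r
      using inverted_within_piece[OF bp inj _ cx] that S(3) unfolding piece_def by auto
    then show ?thesis
      by auto
  qed
  moreover have "{r \<in> S. inverted f r x}
      = {r \<in> S - piece P c. inverted f r x} \<union> {r \<in> S \<inter> piece P c. inverted f r x}"
    by blast
  moreover have "card ({r \<in> S - piece P c. inverted f r x} \<union> {r \<in> S \<inter> piece P c. inverted f r x})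
      = card {r \<in> S - piece P c. inverted f r x} + card {r \<in> S \<inter> piece P c. inverted f r x}"
    by (rule card_Un_disjoint) (use S in auto)
  ultimately show ?thesis
    by simp
qed

lemma inversions_add_points_in_piece:
  assumes bp: "breakpoints f P" and inj: "inj_on f XX"
    and S: "finite S" "S \<subseteq> XX" and N: "finite N" "N \<subseteq> piece P c" "S \<inter> N = {}"
  shows "inversions f (S \<union> N) = inversions f S + card N * card {r \<in> S - piece P c. inverted f r c}
           + (if decreasing_on_piece f P c then card N * card (S \<inter> piece P c) + (card N choose 2) else 0)"
  using N
proof (induction N rule: finite_induct)
  case (insert x N)
  then have x: "x \<in> piece P c" "x \<notin> S \<union> N" and N: "N \<subseteq> piece P c" "S \<inter> N = {}"
    by auto
  have SN: "finite (S \<union> N)" "S \<union> N \<subseteq> XX"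
    using S insert(1) N(1) piece_subset[of P c] by auto
  have "(S \<union> N) - piece P c = S - piece P c" "(S \<union> N) \<inter> piece P c = S \<inter> piece P c \<union> N"
    using N by auto
  moreover have "card (S \<inter> piece P c \<union> N) = card (S \<inter> piece P c) + card N"
    using N S(1) insert(1) by (intro card_Un_disjoint) auto
  ultimately have "card {r \<in> S \<union> N. inverted f r x} = card {r \<in> S - piece P c. inverted f r c}
      + (if decreasing_on_piece f P c then card (S \<inter> piece P c) + card N else 0)"
    using card_inverted_piece_point[OF bp inj x(1) SN x(2)] by simp
  moreover have "inversions f (S \<union> insert x N) = inversions f (S \<union> N) + card {r \<in> S \<union> N. inverted f r x}"
    using inversions_insert[OF SN(1) x(2)] by simp
  moreover have "Suc (card N) choose 2 = (card N choose 2) + card N"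
    by (simp add: numeral_2_eq_2)
  ultimately show ?case
    using insert N by (simp add: algebra_simps)
qed simp

lemma even_inversions_insert_breakpoint:
  assumes bp: "breakpoints f P" and inj: "inj_on f XX" and c: "c \<in> XX - P"
    and M: "three_per_piece P M" and M': "three_per_piece (insert c P) M'"
  shows "even (inversions f (P \<union> M)) \<longleftrightarrow> even (inversions f (insert c P \<union> M'))"
proof -
  have P: "finite P" "0 \<in> P" "P \<subseteq> XX"
    using bp unfolding breakpoints_def by auto
  define a where "a = prev_break P c"
  define b where "b = next_break P a"
  have piece_c: "piece P c = {a<..<b}" "a < c" "c < b"
    using piece_eq_gap[OF P c] mem_gap_prev_break[OF P(1,2) c] unfolding a_def b_def gap_def by auto
  obtain U where U: "finite U" "card U = 3" "U \<subseteq> {a<..<c}"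
    using infinite_arbitrarily_large[of "{a<..<c}" 3] piece_c by auto
  obtain V where V: "finite V" "card V = 3" "V \<subseteq> {c<..<b}"
    using infinite_arbitrarily_large[of "{c<..<b}" 3] piece_c by auto
  have UV: "U \<subseteq> piece P c \<inter> {..<c}" "V \<subseteq> piece P c \<inter> {c<..}"
    using U V piece_c by auto
  define M0 where "M0 = M - piece P c \<union> U"
  have M0: "three_per_piece P M0"
    unfolding M0_def using three_per_piece_replace[OF M U(1) _ U(2)] UV by auto
  have "inversions f (P \<union> M) = inversions f (P \<union> M0)"
    using inversions_three_per_piece_eq[OF bp inj M M0] .
  moreover have "inversions f (insert c P \<union> M') = inversions f (insert c P \<union> (M0 \<union> V))"
    using inversions_three_per_piece_eq[OF breakpoints_insert[OF bp] inj M'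
        three_per_piece_split[OF M U(1) UV(1) U(2) V(1) UV(2) V(2)]] c
    unfolding M0_def by (simp add: Un_assoc)
  moreover have "insert c P \<union> (M0 \<union> V) = (P \<union> M0) \<union> insert c V"
    by auto
  moreover have "(P \<union> M0) \<inter> piece P c = U"
    using piece_subset UV unfolding M0_def by auto
  moreover have "card (insert c V) = 4"
    using V by (subst card_insert_disjoint) auto
  moreover have "insert c V \<subseteq> piece P c"
    using UV c mem_piece_self by auto
  moreover have "(P \<union> M0) \<inter> insert c V = {}"
    using c mem_piece_self[OF c] UV piece_subset[of P c] unfolding M0_def by fastforce
  moreover have "finite (P \<union> M0)" "P \<union> M0 \<subseteq> XX"
    using P M0 unfolding three_per_piece_def by auto
  ultimately show ?thesis
    using inversions_add_points_in_piece[OF bp inj, of "P \<union> M0" "insert c V" c] V(1)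
    by (simp add: choose_two)
qed

lemma even_inversions_refine:
  assumes inj: "inj_on f XX" and D: "finite D" "D \<subseteq> XX"
    and "breakpoints f P" "three_per_piece P M" "three_per_piece (P \<union> D) M'"
  shows "even (inversions f (P \<union> M)) \<longleftrightarrow> even (inversions f (P \<union> D \<union> M'))"
  using D assms(4-6)
proof (induction D arbitrary: P M rule: finite_induct)
  case empty
  then show ?case
    using inversions_three_per_piece_eq[OF empty.prems(2) inj empty.prems(3), of M'] by simp
next
  case (insert c D)
  show ?case
  proof (cases "c \<in> P")
    case True
    then have eq: "P \<union> insert c D = P \<union> D"
      by auto
    have "insert c D \<subseteq> XX \<Longrightarrow> D \<subseteq> XX"
      by simp
    with insert.IH[OF _ insert.prems(2,3)] insert.prems(1,4) show ?thesis
      unfolding eq by blast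
  next
    case False
    then have c: "c \<in> XX - P"
      using insert.prems(1) by simp
    have P: "finite (insert c P)" "0 \<in> insert c P" "insert c P \<subseteq> XX"
      using insert.prems(2) c unfolding breakpoints_def by auto
    obtain M'' where M'': "three_per_piece (insert c P) M''"
      using three_per_piece_exists[OF P] by blast
    have eq: "P \<union> insert c D = insert c P \<union> D"
      by auto
    have "D \<subseteq> XX"
      using insert.prems(1) by simp
    with insert.IH[OF _ breakpoints_insert[OF insert.prems(2)] M''] insert.prems(4) c
    have "even (inversions f (insert c P \<union> M'')) \<longleftrightarrow> even (inversions f (P \<union> insert c D \<union> M'))"
      unfolding eq by blast
    then show ?thesis
      using even_inversions_insert_breakpoint[OF insert.prems(2) inj c insert.prems(3) M''] by blast
  qed
qed

lemma even_inversions_test_sets: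
  assumes inj: "inj_on f XX"
    and P1: "breakpoints f P1" "three_per_piece P1 M1" and P2: "breakpoints f P2" "three_per_piece P2 M2"
  shows "even (inversions f (P1 \<union> M1)) \<longleftrightarrow> even (inversions f (P2 \<union> M2))"
proof -
  have P: "finite P1" "finite P2" "P1 \<subseteq> XX" "P2 \<subseteq> XX" "0 \<in> P1 \<union> P2"
    using P1 P2 unfolding breakpoints_def by auto
  then obtain M where M: "three_per_piece (P1 \<union> P2) M"
    using three_per_piece_exists[of "P1 \<union> P2"] by blast
  have "P2 \<union> P1 = P1 \<union> P2"
    by (rule Un_commute)
  have "even (inversions f (P1 \<union> M1)) \<longleftrightarrow> even (inversions f (P1 \<union> P2 \<union> M))"
    using even_inversions_refine[OF inj P(2,4) P1 M(1)] .
  moreover have "even (inversions f (P2 \<union> M2)) \<longleftrightarrow> even (inversions f (P2 \<union> P1 \<union> M))"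
    using even_inversions_refine[OF inj P(1,3) P2] M \<open>P2 \<union> P1 = P1 \<union> P2\<close> by simp
  ultimately show ?thesis
    using \<open>P2 \<union> P1 = P1 \<union> P2\<close> by simp
qed

section \<open>The parity of a piecewise continuous bijection\<close>

definition test_set :: "(real \<Rightarrow> real) \<Rightarrow> real set \<Rightarrow> bool" where
  "test_set f Q \<longleftrightarrow> (\<exists>P M. breakpoints f P \<and> three_per_piece P M \<and> Q = P \<union> M)"

text \<open>Only meaningful for \<open>f \<in> PC_hat_carrier\<close>; otherwise there is no test set and the choice
  below is arbitrary.\<close>

definition pc_odd :: "(real \<Rightarrow> real) \<Rightarrow> bool" where
  "pc_odd f \<longleftrightarrow> odd (inversions f (SOME Q. test_set f Q))"

lemma test_setI: "breakpoints f P \<Longrightarrow> three_per_piece P M \<Longrightarrow> test_set f (P \<union> M)"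
  unfolding test_set_def by blast

lemma pc_odd_eq:
  assumes "inj_on f XX" "test_set f Q"
  shows "pc_odd f \<longleftrightarrow> odd (inversions f Q)"
proof -
  have "test_set f (SOME Q. test_set f Q)"
    using assms(2) by (rule someI)
  then obtain P1 M1 where 1: "breakpoints f P1" "three_per_piece P1 M1" "(SOME Q. test_set f Q) = P1 \<union> M1"
    unfolding test_set_def by blast
  obtain P2 M2 where 2: "breakpoints f P2" "three_per_piece P2 M2" "Q = P2 \<union> M2"
    using assms(2) unfolding test_set_def by blast
  show ?thesis
    unfolding pc_odd_def 1(3) 2(3) using even_inversions_test_sets[OF assms(1) 1(1,2) 2(1,2)] by simp
qed

lemma test_set_exists:
  assumes "breakpoints f P"
  shows "\<exists>M. test_set f (P \<union> M)"
proof -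
  have "finite P" "0 \<in> P" "P \<subseteq> XX"
    using assms unfolding breakpoints_def by auto
  then obtain M where "three_per_piece P M"
    using three_per_piece_exists by blast
  with assms show ?thesis
    unfolding test_set_def by blast
qed

lemma test_set_finite:
  assumes "test_set f Q"
  shows "finite Q" "Q \<subseteq> XX"
proof -
  obtain P M where "breakpoints f P" "three_per_piece P M" "Q = P \<union> M"
    using assms unfolding test_set_def by blast
  then show "finite Q" "Q \<subseteq> XX"
    unfolding breakpoints_def three_per_piece_def by auto
qed

lemma bij_betw_image_diff:
  assumes "bij_betw g XX XX" "P \<subseteq> XX" "x \<in> XX - P"
  shows "g x \<in> XX - g ` P"
proof -
  have "g x \<notin> g ` P"
    using assms inj_onD[of g XX x] unfolding bij_betw_def by blast
  then show ?thesis
    using assms bij_betw_apply by fastforce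
qed

lemma same_piece_image:
  assumes bp: "breakpoints g P" and inj: "inj_on g XX" and gX: "g ` XX \<subseteq> XX"
    and xy: "same_piece P x y"
  shows "same_piece (g ` P) (g x) (g y)"
  unfolding same_piece_def
proof (intro conjI ballI)
  show "g x \<in> XX" "g y \<in> XX"
    using same_pieceD[OF xy] gX by auto
next
  fix q assume "q \<in> g ` P"
  then obtain p where p: "p \<in> P" "q = g p"
    by blast
  show "\<not> (min (g x) (g y) \<le> q \<and> q \<le> max (g x) (g y))"
  proof
    assume "min (g x) (g y) \<le> q \<and> q \<le> max (g x) (g y)"
    then obtain t where t: "min x y \<le> t" "t \<le> max x y" "g t = g p"
      using piece_IVT[OF bp xy] p(2) by blast
    then have "t \<in> XX - P"
      using same_piece_between[OF xy] same_pieceD by blast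
    moreover have "p \<in> XX"
      using p(1) bp unfolding breakpoints_def by auto
    ultimately show False
      using inj t(3) p(1) by (auto dest: inj_onD)
  qed
qed

text \<open>\<open>g\<close> maps the pieces of \<open>P\<close> into pieces of \<open>g ` P\<close>, onto them since \<open>g\<close> is onto,
  and both partitions have \<open>card P\<close> pieces; so the induced map on pieces is injective.\<close>

lemma prev_break_image_range:
  assumes bp: "breakpoints g P" and bij: "bij_betw g XX XX" and gP: "0 \<in> g ` P"
  shows "(\<lambda>z. prev_break (g ` P) (g z)) ` (XX - P) = g ` P"
proof -
  have P: "P \<subseteq> XX" "finite (g ` P)" "g ` P \<subseteq> XX" and gX: "g ` XX = XX"
    using bp bij unfolding breakpoints_def bij_betw_def by auto
  show ?thesis
  proof (intro equalityI subsetI)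
    fix q assume "q \<in> (\<lambda>z. prev_break (g ` P) (g z)) ` (XX - P)"
    then show "q \<in> g ` P"
      using prev_break_mem[OF P(2) gP] bij_betw_image_diff[OF bij P(1)] by blast
  next
    fix q assume q: "q \<in> g ` P"
    obtain v where v: "v \<in> gap (g ` P) q"
      using gap_nonempty[OF P(2,3) q] by blast
    then have "v \<in> XX - g ` P"
      using gap_subset[OF P(2,3) q] by blast
    then obtain z where "z \<in> XX - P" "v = g z"
      using gX by blast
    then show "q \<in> (\<lambda>z. prev_break (g ` P) (g z)) ` (XX - P)"
      using prev_break_gap[OF P(2) q v] by blast
  qed
qed

lemma prev_break_image:
  assumes bp: "breakpoints g P" and bij: "bij_betw g XX XX" and gP: "0 \<in> g ` P"
  obtains Phi where "inj_on Phi P"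
    "\<And>z. z \<in> XX - P \<Longrightarrow> prev_break (g ` P) (g z) = Phi (prev_break P z)"
proof -
  have P: "finite P" "0 \<in> P" "P \<subseteq> XX"
    using bp unfolding breakpoints_def by auto
  have inj: "inj_on g XX" and gX: "g ` XX = XX"
    using bij by (auto simp: bij_betw_def)
  have gP': "finite (g ` P)" "g ` P \<subseteq> XX"
    using P gX by auto
  have gXP: "g z \<in> XX - g ` P" if "z \<in> XX - P" for z
    using bij_betw_image_diff[OF bij P(3) that] .
  define w where "w p = (SOME v. v \<in> gap P p)" for p
  have w: "w p \<in> gap P p" if "p \<in> P" for p
    unfolding w_def using gap_nonempty[OF P(1,3) that] by (simp add: some_in_eq)
  define Phi where "Phi p = prev_break (g ` P) (g (w p))" for p
  have key: "prev_break (g ` P) (g z) = Phi (prev_break P z)" if z: "z \<in> XX - P" for z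
  proof -
    have "w (prev_break P z) \<in> piece P z"
      using w prev_break_mem[OF P(1,2) z] piece_eq_gap[OF P z] by blast
    then have "same_piece (g ` P) (g z) (g (w (prev_break P z)))"
      using same_piece_image[OF bp inj] gX unfolding piece_def by blast
    then show ?thesis
      unfolding Phi_def using same_piece_iff_prev_break[OF gP'(1) gP gP'(2)] gXP same_pieceD by blast
  qed
  have "Phi ` P = g ` P"
  proof (intro equalityI subsetI)
    fix q assume "q \<in> Phi ` P"
    then obtain p where "p \<in> P" "q = Phi p"
      by blast
    then have "w p \<in> XX - P"
      using w gap_subset[OF P(1,3)] by blast
    then have "Phi p \<in> (\<lambda>z. prev_break (g ` P) (g z)) ` (XX - P)"
      unfolding Phi_def by (rule imageI)
    then show "q \<in> g ` P"
      unfolding \<open>q = Phi p\<close> prev_break_image_range[OF bp bij gP] .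
  next
    fix q assume "q \<in> g ` P"
    then have "q \<in> (\<lambda>z. prev_break (g ` P) (g z)) ` (XX - P)"
      using prev_break_image_range[OF bp bij gP] by simp
    then obtain z where z: "z \<in> XX - P" "q = prev_break (g ` P) (g z)"
      by blast
    then have "q = Phi (prev_break P z)"
      using key by simp
    then show "q \<in> Phi ` P"
      using prev_break_mem[OF P(1,2) z(1)] by blast
  qed
  moreover have "card (g ` P) = card P"
    using card_image inj P(3) inj_on_subset by blast
  ultimately have "inj_on Phi P"
    using eq_card_imp_inj_on[OF P(1), of Phi] by simp
  with key show ?thesis
    using that by blast
qed

lemma same_piece_image_iff:
  assumes bp: "breakpoints g P" and bij: "bij_betw g XX XX" and gP: "0 \<in> g ` P"
    and x: "x \<in> XX - P" and y: "y \<in> XX - P"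
  shows "same_piece (g ` P) (g x) (g y) \<longleftrightarrow> same_piece P x y"
proof
  have P: "finite P" "0 \<in> P" "P \<subseteq> XX" "finite (g ` P)" "g ` P \<subseteq> XX"
    using bp bij unfolding breakpoints_def bij_betw_def by auto
  obtain Phi where Phi: "inj_on Phi P"
    "\<And>z. z \<in> XX - P \<Longrightarrow> prev_break (g ` P) (g z) = Phi (prev_break P z)"
    using prev_break_image[OF bp bij gP] by blast
  assume "same_piece (g ` P) (g x) (g y)"
  then have "Phi (prev_break P x) = Phi (prev_break P y)"
    using Phi(2) x y same_piece_iff_prev_break[OF P(4) gP P(5)] bij_betw_image_diff[OF bij P(3)] by metis
  then show "same_piece P x y"
    using Phi(1) prev_break_mem[OF P(1,2)] x y same_piece_iff_prev_break[OF P(1-3) x y] by (auto dest: inj_onD)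
next
  show "same_piece P x y \<Longrightarrow> same_piece (g ` P) (g x) (g y)"
    using same_piece_image[OF bp] bij unfolding bij_betw_def by blast
qed

lemma image_inter_piece:
  assumes bp: "breakpoints g P" and bij: "bij_betw g XX XX" and gP: "0 \<in> g ` P"
    and M: "M \<subseteq> XX - P" and x: "x \<in> XX - P"
  shows "g ` M \<inter> piece (g ` P) (g x) = g ` (M \<inter> piece P x)"
proof (intro equalityI subsetI)
  fix z assume "z \<in> g ` M \<inter> piece (g ` P) (g x)"
  then obtain m where m: "m \<in> M" "z = g m" "same_piece (g ` P) (g x) (g m)"
    unfolding piece_def by auto
  then have "same_piece P x m"
    using same_piece_image_iff[OF bp bij gP x, of m] M by auto
  with m show "z \<in> g ` (M \<inter> piece P x)"
    unfolding piece_def by auto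
next
  fix z assume "z \<in> g ` (M \<inter> piece P x)"
  then obtain m where m: "m \<in> M" "z = g m" "same_piece P x m"
    unfolding piece_def by auto
  then have "same_piece (g ` P) (g x) (g m)"
    using same_piece_image_iff[OF bp bij gP x, of m] M by auto
  with m show "z \<in> g ` M \<inter> piece (g ` P) (g x)"
    unfolding piece_def by auto
qed

lemma three_per_piece_image:
  assumes bp: "breakpoints g P" and bij: "bij_betw g XX XX" and gP: "0 \<in> g ` P"
    and M: "three_per_piece P M"
  shows "three_per_piece (g ` P) (g ` M)"
  unfolding three_per_piece_def
proof (intro conjI ballI)
  have inj: "inj_on g XX" and gX: "g ` XX = XX"
    using bij by (auto simp: bij_betw_def)
  have MP: "finite M" "M \<subseteq> XX - P" "P \<subseteq> XX"
    using M bp unfolding three_per_piece_def breakpoints_def by auto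
  show "finite (g ` M)"
    using MP by simp
  show "g ` M \<subseteq> XX - g ` P"
  proof
    fix z assume "z \<in> g ` M"
    then obtain m where "m \<in> M" "z = g m"
      by blast
    then show "z \<in> XX - g ` P"
      using bij_betw_image_diff[OF bij MP(3), of m] MP(2) by auto
  qed
  fix y assume y: "y \<in> XX - g ` P"
  then have "y \<in> g ` XX"
    using gX by simp
  then obtain x where "x \<in> XX" "y = g x"
    by blast
  with y have x: "x \<in> XX - P" "y = g x"
    by auto
  have "g ` M \<inter> piece (g ` P) y = g ` (M \<inter> piece P x)"
    unfolding x(2) using image_inter_piece[OF bp bij gP MP(2) x(1)] .
  moreover have "inj_on g (M \<inter> piece P x)"
    using inj_on_subset[OF inj] MP(2) by blast
  moreover have "card (M \<inter> piece P x) = 3"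
    using M x(1) unfolding three_per_piece_def by blast
  ultimately show "card (g ` M \<inter> piece (g ` P) y) = 3"
    by (simp add: card_image)
qed

lemma breakpoints_exist:
  assumes "f \<in> PC_hat_carrier"
  shows "\<exists>P. breakpoints f P"
proof -
  obtain F where "finite F" "F \<subseteq> XX" "\<forall>x\<in>XX - F. continuous (at x within XX) f"
    using assms unfolding PC_hat_carrier_def by blast
  then have "breakpoints f (insert 0 F)"
    unfolding breakpoints_def XX_def by auto
  then show ?thesis ..
qed

lemma PC_hat_carrierI: "f \<in> Bij XX \<Longrightarrow> breakpoints f P \<Longrightarrow> f \<in> PC_hat_carrier"
  unfolding PC_hat_carrier_def breakpoints_def by blast

lemma PC_hat_carrier_Bij: "f \<in> PC_hat_carrier \<Longrightarrow> f \<in> Bij XX"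
  unfolding PC_hat_carrier_def by simp

lemma bij_betw_PC_hat: "f \<in> PC_hat_carrier \<Longrightarrow> bij_betw f XX XX"
  using PC_hat_carrier_Bij unfolding Bij_def by simp

lemma breakpoints_compose:
  assumes g: "breakpoints g P" and f: "breakpoints f (g ` P)" and bij: "bij_betw g XX XX"
  shows "breakpoints (compose XX f g) P"
  unfolding breakpoints_def
proof (intro conjI ballI)
  show "finite P" "P \<subseteq> XX" "0 \<in> P"
    using g unfolding breakpoints_def by auto
  fix x assume x: "x \<in> XX - P"
  have "g x \<in> XX - g ` P"
    using bij_betw_image_diff[OF bij \<open>P \<subseteq> XX\<close> x] .
  then have "continuous (at (g x) within g ` XX) f"
    using f bij unfolding breakpoints_def bij_betw_def by auto
  moreover have "continuous (at x within XX) g"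
    using g x unfolding breakpoints_def by auto
  ultimately have "continuous (at x within XX) (f \<circ> g)"
    using continuous_within_compose by blast
  then show "continuous (at x within XX) (compose XX f g)"
    by (rule continuous_transform_within[of _ _ _ 1]) (use x in \<open>auto simp: compose_def\<close>)
qed

lemma common_breakpoints:
  assumes f: "f \<in> PC_hat_carrier" and g: "g \<in> PC_hat_carrier"
  shows "\<exists>P. breakpoints g P \<and> breakpoints f (g ` P)"
proof -
  obtain Pf Pg where P: "breakpoints f Pf" "breakpoints g Pg"
    using breakpoints_exist f g by metis
  have Pf: "finite Pf" "Pf \<subseteq> XX" and Pg: "finite Pg" "Pg \<subseteq> XX"
    using P unfolding breakpoints_def by auto
  have bij: "bij_betw g XX XX"
    using g by (rule bij_betw_PC_hat)
  then have gX: "g ` XX = XX"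
    by (simp add: bij_betw_def)
  define P where "P = Pg \<union> inv_into XX g ` Pf"
  have "inv_into XX g ` Pf \<subseteq> XX"
    using Pf(2) gX inv_into_into[of _ g XX] by blast
  then have "breakpoints g P"
    using Pf Pg unfolding P_def by (intro breakpoints_mono[OF P(2)]) auto
  moreover have "Pf \<subseteq> g ` P"
  proof
    fix y assume "y \<in> Pf"
    then have "g (inv_into XX g y) = y"
      using Pf(2) gX f_inv_into_f[of y g XX] by blast
    with \<open>y \<in> Pf\<close> show "y \<in> g ` P"
      unfolding P_def by (metis UnCI imageI)
  qed
  moreover have "finite (g ` P)" "g ` P \<subseteq> XX"
    using \<open>breakpoints g P\<close> gX unfolding breakpoints_def by auto
  ultimately show ?thesis
    using breakpoints_mono[OF P(1)] by blast
qed

lemma compose_PC_hat: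
  assumes "f \<in> PC_hat_carrier" "g \<in> PC_hat_carrier"
  shows "compose XX f g \<in> PC_hat_carrier"
proof -
  obtain P where P: "breakpoints g P" "breakpoints f (g ` P)"
    using common_breakpoints[OF assms] by blast
  show ?thesis
    using PC_hat_carrierI[OF compose_Bij breakpoints_compose[OF P bij_betw_PC_hat[OF assms(2)]]]
      PC_hat_carrier_Bij[OF assms(1)] PC_hat_carrier_Bij[OF assms(2)] .
qed

lemma pc_odd_compose:
  assumes f: "f \<in> PC_hat_carrier" and g: "g \<in> PC_hat_carrier"
  shows "pc_odd (compose XX f g) \<longleftrightarrow> pc_odd f \<noteq> pc_odd g"
proof -
  let ?h = "compose XX f g"
  obtain P where P: "breakpoints g P" "breakpoints f (g ` P)"
    using common_breakpoints[OF f g] by blast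
  have inj: "inj_on g XX" "inj_on f XX" "inj_on ?h XX"
    using bij_betw_PC_hat[OF g] bij_betw_PC_hat[OF f] bij_betw_PC_hat[OF compose_PC_hat[OF f g]]
    by (simp_all add: bij_betw_imp_inj_on)
  have "finite P" "0 \<in> P" "P \<subseteq> XX" "0 \<in> g ` P"
    using P unfolding breakpoints_def by auto
  then obtain M where M: "three_per_piece P M"
    using three_per_piece_exists by blast
  have "test_set f (g ` P \<union> g ` M)"
    using test_setI[OF P(2) three_per_piece_image[OF P(1) bij_betw_PC_hat[OF g] \<open>0 \<in> g ` P\<close> M]] .
  then have f_odd: "pc_odd f \<longleftrightarrow> odd (inversions f (g ` (P \<union> M)))"
    unfolding image_Un by (rule pc_odd_eq[OF inj(2)])
  have Q: "test_set g (P \<union> M)"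
    using test_setI[OF P(1) M] .
  then have g_odd: "pc_odd g \<longleftrightarrow> odd (inversions g (P \<union> M))"
    by (rule pc_odd_eq[OF inj(1)])
  have h_odd: "pc_odd ?h \<longleftrightarrow> odd (inversions ?h (P \<union> M))"
    using pc_odd_eq[OF inj(3) test_setI[OF breakpoints_compose[OF P bij_betw_PC_hat[OF g]] M]] .
  have "even (inversions ?h (P \<union> M)) \<longleftrightarrow>
      (even (inversions g (P \<union> M)) \<longleftrightarrow> even (inversions f (g ` (P \<union> M))))"
  proof (rule even_inversions_comp)
    show "finite (P \<union> M)"
      using test_set_finite(1)[OF Q] .
    show "inj_on g (P \<union> M)" "inj_on ?h (P \<union> M)"
      using inj(1,3) inj_on_subset[OF _ test_set_finite(2)[OF Q]] by blast+
    show "?h x = f (g x)" if "x \<in> P \<union> M" for x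
      using subsetD[OF test_set_finite(2)[OF Q] that] by (simp add: compose_def)
  qed
  then show ?thesis
    using f_odd g_odd h_odd by auto
qed

section \<open>Finitely supported permutations\<close>

lemma continuous_if_id_off_finite:
  assumes "finite S" "\<And>x. x \<in> XX - S \<Longrightarrow> f x = x" "x \<in> XX - S"
  shows "continuous (at x within XX) f"
proof -
  obtain e where e: "e > 0" "ball x e \<subseteq> - S"
    using assms(1,3) finite_imp_closed[OF assms(1)] open_contains_ball[of "- S"] by (auto simp: open_Compl)
  show ?thesis
  proof (rule continuous_transform_within[of x XX "\<lambda>y. y" e])
    fix y assume "y \<in> XX" "dist y x < e"
    then show "y = f y"
      using e assms(2) by (auto simp: dist_commute)
  qed (use e assms(3) in auto)
qed

lemma Sfin_subset_PC_hat: "Sfin \<subseteq> PC_hat_carrier"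
proof
  fix s assume "s \<in> Sfin"
  then have s: "s \<in> Bij XX" "finite {x \<in> XX. s x \<noteq> x}"
    unfolding Sfin_def by auto
  then have "breakpoints s (insert 0 {x \<in> XX. s x \<noteq> x})"
    unfolding breakpoints_def using continuous_if_id_off_finite[OF s(2)] by (auto simp: XX_def)
  with s(1) show "s \<in> PC_hat_carrier"
    by (rule PC_hat_carrierI)
qed

lemma restrict_permutes_Sfin:
  assumes "p permutes S" "finite S" "S \<subseteq> XX"
  shows "restrict p XX \<in> Sfin"
proof -
  have "bij_betw p XX XX"
    using permutes_imp_bij[OF permutes_subset[OF assms(1,3)]] .
  then have "restrict p XX \<in> Bij XX"
    unfolding Bij_def by (auto simp: bij_betw_def inj_on_def)
  moreover have "{x \<in> XX. restrict p XX x \<noteq> x} \<subseteq> S"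
    using permutes_not_in[OF assms(1)] by auto
  then have "finite {x \<in> XX. restrict p XX x \<noteq> x}"
    using assms(2) by (rule finite_subset)
  ultimately show ?thesis
    unfolding Sfin_def by blast
qed

lemma pc_odd_identity: "\<not> pc_odd (\<lambda>x\<in>XX. x)"
proof -
  have bp: "breakpoints ((\<lambda>x\<in>XX. x)) {0}"
    unfolding breakpoints_def using continuous_if_id_off_finite[of "{}" "(\<lambda>x\<in>XX. x)"]
    by (auto simp: XX_def)
  then obtain M where Q: "test_set ((\<lambda>x\<in>XX. x)) ({0} \<union> M)"
    using test_set_exists by blast
  have "inversions ((\<lambda>x\<in>XX. x)) ({0} \<union> M) = inversions id ({0} \<union> M)"
    using test_set_finite(2)[OF Q] by (intro inversions_cong) auto
  then have "inversions ((\<lambda>x\<in>XX. x)) ({0} \<union> M) = 0"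
    by (simp only: inversions_id)
  moreover have "inj_on ((\<lambda>x\<in>XX. x)) XX"
    by (simp add: inj_on_def)
  ultimately show ?thesis
    using pc_odd_eq Q by simp
qed

lemma pc_odd_transpose:
  assumes "a \<in> XX" "b \<in> XX" "a \<noteq> b"
  shows "pc_odd (restrict (Transposition.transpose a b) XX)"
proof -
  let ?t = "restrict (Transposition.transpose a b) XX"
  have "breakpoints ?t {0, a, b}"
    unfolding breakpoints_def using assms continuous_if_id_off_finite[of "{a, b}" ?t]
    by (auto simp: XX_def)
  then obtain M where Q: "test_set ?t ({0, a, b} \<union> M)"
    using test_set_exists by blast
  have QX: "finite ({0, a, b} \<union> M)" "{0, a, b} \<union> M \<subseteq> XX"
    using test_set_finite[OF Q] by auto
  then have "inversions ?t ({0, a, b} \<union> M) = inversions (Transposition.transpose a b) ({0, a, b} \<union> M)"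
    by (intro inversions_cong) auto
  also have "odd \<dots>"
  proof (cases "a < b")
    case True
    then show ?thesis
      using inversions_transpose[OF True QX(1)] by simp
  next
    case False
    then have "b < a"
      using assms(3) by simp
    then show ?thesis
      using inversions_transpose[OF \<open>b < a\<close> QX(1)] by (simp add: transpose_commute)
  qed
  moreover have "inj_on ?t XX"
    using restrict_permutes_Sfin[OF permutes_swap_id, of a "{a, b}" b] assms
    unfolding Sfin_def Bij_def bij_betw_def by auto
  ultimately show ?thesis
    using pc_odd_eq Q by simp
qed

lemma pc_odd_permutes:
  assumes "p permutes S" "finite S" "S \<subseteq> XX"
  shows "pc_odd (restrict p XX) \<longleftrightarrow> \<not> evenperm p"
  using assms(1,2)
proof (induction rule: permutes_induct)
  case id
  have "restrict id XX = (\<lambda>x\<in>XX. x)"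
    by (simp only: id_def)
  then show ?case
    using pc_odd_identity evenperm_id by metis
next
  case (swap a b p)
  let ?t = "restrict (Transposition.transpose a b) XX"
  have ab: "a \<in> XX" "b \<in> XX"
    using swap(1,2) assms(3) by auto
  have "p x \<in> XX" if "x \<in> XX" for x
    using permutes_in_image[OF permutes_subset[OF swap(4) assms(3)]] that by simp
  then have comp: "restrict (Transposition.transpose a b \<circ> p) XX = compose XX ?t (restrict p XX)"
    by (auto simp: compose_def)
  have "?t \<in> PC_hat_carrier" "restrict p XX \<in> PC_hat_carrier"
    using restrict_permutes_Sfin[OF permutes_swap_id[of a "{a, b}" b]] ab
      restrict_permutes_Sfin[OF swap(4) assms(2,3)] Sfin_subset_PC_hat by auto
  then have "pc_odd (compose XX ?t (restrict p XX)) \<longleftrightarrow> \<not> pc_odd (restrict p XX)"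
    using pc_odd_compose pc_odd_transpose[OF ab swap(3)] by blast
  moreover have "evenperm (Transposition.transpose a b \<circ> p) \<longleftrightarrow> \<not> evenperm p"
    using evenperm_comp[OF permutation_swap_id permutes_imp_permutation[OF assms(2) swap(4)]]
      evenperm_swap[of a b] swap(3) by simp
  ultimately show ?case
    unfolding comp using swap(5) by blast
qed

lemma pc_odd_Sfin:
  assumes "s \<in> Sfin"
  shows "pc_odd s \<longleftrightarrow> \<not> evenperm (restrict_id s XX)"
proof -
  let ?S = "{x \<in> XX. s x \<noteq> x}"
  have s: "bij_betw s XX XX" "s \<in> extensional XX" "finite ?S"
    using assms unfolding Sfin_def Bij_def by auto
  have "restrict_id s XX permutes ?S"
    using permutes_restrict_id[OF s(1)] unfolding permutes_def by (auto simp: restrict_id_def)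
  moreover have "restrict (restrict_id s XX) XX = s"
    using s(2) by (auto simp: extensional_def)
  ultimately show ?thesis
    using pc_odd_permutes[of "restrict_id s XX" ?S] s(3) by auto
qed

lemma Afin_eq: "Afin = {s \<in> Sfin. \<not> pc_odd s}"
  unfolding Afin_def using pc_odd_Sfin by auto

section \<open>The splitting\<close>

interpretation SX_group: group SX
  by (rule group_BijGroup)

lemma carrier_SX: "carrier SX = Bij XX"
  by (simp add: BijGroup_def)

lemma mult_SX: "f \<in> Bij XX \<Longrightarrow> g \<in> Bij XX \<Longrightarrow> f \<otimes>\<^bsub>SX\<^esub> g = compose XX f g"
  by (simp add: BijGroup_def)

lemma PC_hat_mult:
  assumes "f \<in> PC_hat_carrier" "g \<in> PC_hat_carrier"
  shows "f \<otimes>\<^bsub>SX\<^esub> g \<in> PC_hat_carrier" "pc_odd (f \<otimes>\<^bsub>SX\<^esub> g) \<longleftrightarrow> pc_odd f \<noteq> pc_odd g"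
  using compose_PC_hat[OF assms] pc_odd_compose[OF assms] mult_SX PC_hat_carrier_Bij assms by simp_all

lemma Sfin_subset_Bij: "Sfin \<subseteq> Bij XX"
  unfolding Sfin_def by blast

lemma Sfin_subgroup: "subgroup Sfin SX"
proof (rule SX_group.subgroupI)
  show "Sfin \<subseteq> carrier SX"
    unfolding carrier_SX Sfin_def by blast
  have "(\<lambda>x\<in>XX. x) \<in> Sfin"
    unfolding Sfin_def using id_Bij by simp
  then show "Sfin \<noteq> {}"
    by blast
next
  fix f assume "f \<in> Sfin"
  then have f: "f \<in> Bij XX" "finite {x \<in> XX. f x \<noteq> x}"
    unfolding Sfin_def by auto
  have "{z \<in> XX. (inv\<^bsub>SX\<^esub> f) z \<noteq> z} \<subseteq> {x \<in> XX. f x \<noteq> x}"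
  proof
    fix z assume "z \<in> {z \<in> XX. (inv\<^bsub>SX\<^esub> f) z \<noteq> z}"
    then have z: "z \<in> XX" "inv_into XX f z \<noteq> z"
      using inv_BijGroup[OF f(1)] by auto
    have "f z \<noteq> z"
    proof
      assume "f z = z"
      then have "inv_into XX f z = z"
        using inv_into_f_f[of f XX z] f(1) z(1) unfolding Bij_def bij_betw_def by auto
      with z(2) show False ..
    qed
    with z(1) show "z \<in> {x \<in> XX. f x \<noteq> x}"
      by simp
  qed
  moreover have "inv\<^bsub>SX\<^esub> f \<in> Bij XX"
    using SX_group.inv_closed f(1) unfolding carrier_SX by simp
  ultimately show "inv\<^bsub>SX\<^esub> f \<in> Sfin"
    unfolding Sfin_def using f(2) finite_subset by blast
next
  fix f g assume "f \<in> Sfin" "g \<in> Sfin"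
  then have fg: "f \<in> Bij XX" "g \<in> Bij XX" "finite ({x \<in> XX. f x \<noteq> x} \<union> {x \<in> XX. g x \<noteq> x})"
    unfolding Sfin_def by auto
  moreover have "{x \<in> XX. compose XX f g x \<noteq> x} \<subseteq> {x \<in> XX. f x \<noteq> x} \<union> {x \<in> XX. g x \<noteq> x}"
    by (auto simp: compose_def)
  ultimately show "f \<otimes>\<^bsub>SX\<^esub> g \<in> Sfin"
    unfolding Sfin_def mult_SX[OF fg(1,2)] using compose_Bij[OF fg(1,2)] finite_subset by blast
qed

lemma conj_Sfin:
  assumes x: "x \<in> Bij XX" and s: "s \<in> Sfin"
  shows "x \<otimes>\<^bsub>SX\<^esub> s \<otimes>\<^bsub>SX\<^esub> inv\<^bsub>SX\<^esub> x \<in> Sfin"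
proof -
  let ?c = "x \<otimes>\<^bsub>SX\<^esub> s \<otimes>\<^bsub>SX\<^esub> inv\<^bsub>SX\<^esub> x"
  have B: "s \<in> Bij XX" "finite {x \<in> XX. s x \<noteq> x}" "x ` XX = XX"
    using s x unfolding Sfin_def Bij_def bij_betw_def by auto
  have "?c \<in> Bij XX"
    using SX_group.m_closed SX_group.inv_closed x B(1) unfolding carrier_SX by simp
  moreover have "?c = compose XX (compose XX x s) (\<lambda>y\<in>XX. inv_into XX x y)"
    using mult_SX[OF compose_Bij[OF x B(1)] restrict_inv_into_Bij[OF x]] mult_SX[OF x B(1)]
      inv_BijGroup[OF x] by simp
  then have c: "?c z = x (s (inv_into XX x z))" if "z \<in> XX" for z
    using that inv_into_into[of z x XX] B(3) by (simp add: compose_def)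
  have "{z \<in> XX. ?c z \<noteq> z} \<subseteq> x ` {y \<in> XX. s y \<noteq> y}"
  proof
    fix z assume "z \<in> {z \<in> XX. ?c z \<noteq> z}"
    then have z: "z \<in> XX" "x (s (inv_into XX x z)) \<noteq> z"
      using c by auto
    let ?y = "inv_into XX x z"
    have y: "?y \<in> XX" "x ?y = z"
      using z(1) B(3) inv_into_into[of z x XX] f_inv_into_f[of z x XX] by auto
    then have "?y \<in> {y \<in> XX. s y \<noteq> y}"
      using z(2) by auto
    then show "z \<in> x ` {y \<in> XX. s y \<noteq> y}"
      using imageI[of ?y _ x] y(2) by simp
  qed
  ultimately show ?thesis
    unfolding Sfin_def using finite_subset[OF _ finite_imageI[OF B(2)]] by blast
qed

lemma Sfin_normal: "Sfin \<lhd> SX"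
  unfolding SX_group.normal_inv_iff carrier_SX using Sfin_subgroup conj_Sfin by blast

lemma one_in_Afin: "\<one>\<^bsub>SX\<^esub> \<in> Afin"
  unfolding Afin_eq using subgroup.one_closed[OF Sfin_subgroup] pc_odd_identity
  by (simp add: BijGroup_def)

lemma Afin_mult_Sfin: "Afin <#>\<^bsub>SX\<^esub> Sfin = Sfin"
proof
  show "Afin <#>\<^bsub>SX\<^esub> Sfin \<subseteq> Sfin"
    using subgroup.m_closed[OF Sfin_subgroup] unfolding Afin_eq set_mult_def by auto
  show "Sfin \<subseteq> Afin <#>\<^bsub>SX\<^esub> Sfin"
  proof
    fix s assume "s \<in> Sfin"
    then have "s = \<one>\<^bsub>SX\<^esub> \<otimes>\<^bsub>SX\<^esub> s"
      using Sfin_subset_Bij carrier_SX by auto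
    with \<open>s \<in> Sfin\<close> show "s \<in> Afin <#>\<^bsub>SX\<^esub> Sfin"
      using one_in_Afin unfolding set_mult_def by blast
  qed
qed

definition even_part :: "(real \<Rightarrow> real) set \<Rightarrow> (real \<Rightarrow> real) set" where
  "even_part A = {f \<in> A. \<not> pc_odd f}"

lemma even_part_coset:
  assumes "h \<in> PC_hat_carrier" "\<not> pc_odd h"
  shows "even_part (Sfin #>\<^bsub>SX\<^esub> h) = Afin #>\<^bsub>SX\<^esub> h"
proof -
  have "\<not> pc_odd (s \<otimes>\<^bsub>SX\<^esub> h) \<longleftrightarrow> \<not> pc_odd s" if "s \<in> Sfin" for s
    using PC_hat_mult(2)[OF _ assms(1)] Sfin_subset_PC_hat that assms(2) by blast
  then show ?thesis
    unfolding even_part_def Afin_eq r_coset_def by blast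
qed

lemma even_part_mult:
  assumes h1: "h1 \<in> PC_hat_carrier" "\<not> pc_odd h1" and h2: "h2 \<in> PC_hat_carrier" "\<not> pc_odd h2"
  shows "even_part ((Sfin #>\<^bsub>SX\<^esub> h1) <#>\<^bsub>SX\<^esub> (Sfin #>\<^bsub>SX\<^esub> h2))
      = even_part (Sfin #>\<^bsub>SX\<^esub> h1) <#>\<^bsub>SX\<^esub> even_part (Sfin #>\<^bsub>SX\<^esub> h2)"
proof -
  have h: "h1 \<in> carrier SX" "h2 \<in> carrier SX" "h1 \<otimes>\<^bsub>SX\<^esub> h2 \<in> PC_hat_carrier"
    "\<not> pc_odd (h1 \<otimes>\<^bsub>SX\<^esub> h2)"
    using h1 h2 PC_hat_carrier_Bij carrier_SX PC_hat_mult by auto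
  have prod: "(Sfin #>\<^bsub>SX\<^esub> h1) <#>\<^bsub>SX\<^esub> (Sfin #>\<^bsub>SX\<^esub> h2) = Sfin #>\<^bsub>SX\<^esub> (h1 \<otimes>\<^bsub>SX\<^esub> h2)"
    using normal.rcos_sum[OF Sfin_normal h(1,2)] .
  show ?thesis
    unfolding prod even_part_coset[OF h(3,4)] even_part_coset[OF h1] even_part_coset[OF h2]
  proof
    show "Afin #>\<^bsub>SX\<^esub> (h1 \<otimes>\<^bsub>SX\<^esub> h2) \<subseteq> (Afin #>\<^bsub>SX\<^esub> h1) <#>\<^bsub>SX\<^esub> (Afin #>\<^bsub>SX\<^esub> h2)"
    proof
      fix f assume "f \<in> Afin #>\<^bsub>SX\<^esub> (h1 \<otimes>\<^bsub>SX\<^esub> h2)"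
      then obtain a where a: "a \<in> Afin" "f = a \<otimes>\<^bsub>SX\<^esub> (h1 \<otimes>\<^bsub>SX\<^esub> h2)"
        unfolding r_coset_def by blast
      then have "f = (a \<otimes>\<^bsub>SX\<^esub> h1) \<otimes>\<^bsub>SX\<^esub> (\<one>\<^bsub>SX\<^esub> \<otimes>\<^bsub>SX\<^esub> h2)"
        using h Afin_eq Sfin_subset_Bij carrier_SX SX_group.m_assoc by auto
      then show "f \<in> (Afin #>\<^bsub>SX\<^esub> h1) <#>\<^bsub>SX\<^esub> (Afin #>\<^bsub>SX\<^esub> h2)"
        using a(1) one_in_Afin unfolding r_coset_def set_mult_def by blast
    qed
  next
    have "x \<otimes>\<^bsub>SX\<^esub> y \<in> even_part (Sfin #>\<^bsub>SX\<^esub> (h1 \<otimes>\<^bsub>SX\<^esub> h2))"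
      if "x \<in> even_part (Sfin #>\<^bsub>SX\<^esub> h1)" "y \<in> even_part (Sfin #>\<^bsub>SX\<^esub> h2)" for x y
    proof -
      have "x \<in> PC_hat_carrier" "y \<in> PC_hat_carrier"
        using that PC_hat_mult(1) Sfin_subset_PC_hat h1 h2 unfolding even_part_def r_coset_def by blast+
      then show ?thesis
        using that PC_hat_mult(2) prod unfolding even_part_def set_mult_def by blast
    qed
    then show "(Afin #>\<^bsub>SX\<^esub> h1) <#>\<^bsub>SX\<^esub> (Afin #>\<^bsub>SX\<^esub> h2) \<subseteq> Afin #>\<^bsub>SX\<^esub> (h1 \<otimes>\<^bsub>SX\<^esub> h2)"
      unfolding even_part_coset[OF h(3,4), symmetric] even_part_coset[OF h1, symmetric]
        even_part_coset[OF h2, symmetric] set_mult_def by blast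
  qed
qed

lemma Afin_coset_mult_Sfin:
  assumes "h \<in> Bij XX"
  shows "(Afin #>\<^bsub>SX\<^esub> h) <#>\<^bsub>SX\<^esub> Sfin = Sfin #>\<^bsub>SX\<^esub> h"
proof -
  have sub: "Afin \<subseteq> carrier SX" "Sfin \<subseteq> carrier SX" "h \<in> carrier SX"
    using assms Sfin_subset_Bij carrier_SX unfolding Afin_eq by auto
  have "(Afin #>\<^bsub>SX\<^esub> h) <#>\<^bsub>SX\<^esub> Sfin = Afin <#>\<^bsub>SX\<^esub> (h <#\<^bsub>SX\<^esub> Sfin)"
    using SX_group.rcos_assoc_lcos[OF sub] .
  also have "h <#\<^bsub>SX\<^esub> Sfin = Sfin #>\<^bsub>SX\<^esub> h"
    using normal.coset_eq[OF Sfin_normal] sub(3) by simp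
  also have "Afin <#>\<^bsub>SX\<^esub> (Sfin #>\<^bsub>SX\<^esub> h) = (Afin <#>\<^bsub>SX\<^esub> Sfin) #>\<^bsub>SX\<^esub> h"
    using SX_group.setmult_rcos_assoc[OF sub] .
  finally show ?thesis
    unfolding Afin_mult_Sfin .
qed

lemma carrier_PC: "carrier PC = (\<lambda>h. Sfin #>\<^bsub>SX\<^esub> h) ` PC_hat_carrier"
  unfolding PC_def FactGroup_def RCOSETS_def PC_hat_def r_coset_def by auto

lemma mult_PC: "g1 \<otimes>\<^bsub>PC\<lparr>carrier := G\<rparr>\<^esub> g2 = g1 <#>\<^bsub>SX\<^esub> g2"
  unfolding PC_def FactGroup_def PC_hat_def set_mult_def by simp

lemma carrier_kap_ext: "carrier (kap_ext G) = (\<lambda>h. Afin #>\<^bsub>SX\<^esub> h) ` G_hat G"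
  unfolding kap_ext_def FactGroup_def RCOSETS_def r_coset_def by auto

lemma mult_kap_ext: "A \<otimes>\<^bsub>kap_ext G\<^esub> B = A <#>\<^bsub>SX\<^esub> B"
  unfolding kap_ext_def FactGroup_def set_mult_def by simp

lemma even_coset_representative:
  assumes "g \<in> carrier PC"
  shows "\<exists>h \<in> PC_hat_carrier. \<not> pc_odd h \<and> g = Sfin #>\<^bsub>SX\<^esub> h"
proof -
  obtain h0 where h0: "h0 \<in> PC_hat_carrier" "g = Sfin #>\<^bsub>SX\<^esub> h0"
    using assms unfolding carrier_PC by blast
  show ?thesis
  proof (cases "pc_odd h0")
    case True
    let ?t = "restrict (Transposition.transpose 0 (1 / 2)) XX"
    have "?t \<in> Sfin" "pc_odd ?t"
      using restrict_permutes_Sfin[OF permutes_swap_id, of 0 "{0, 1 / 2}" "1 / 2"] pc_odd_transpose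
      by (auto simp: XX_def)
    then have "?t \<otimes>\<^bsub>SX\<^esub> h0 \<in> PC_hat_carrier" "\<not> pc_odd (?t \<otimes>\<^bsub>SX\<^esub> h0)"
      using PC_hat_mult[OF _ h0(1)] Sfin_subset_PC_hat True by auto
    moreover have "Sfin #>\<^bsub>SX\<^esub> (?t \<otimes>\<^bsub>SX\<^esub> h0) = Sfin #>\<^bsub>SX\<^esub> h0"
      using SX_group.coset_mult_assoc[symmetric] SX_group.coset_join2 Sfin_subgroup
        \<open>?t \<in> Sfin\<close> h0(1) Sfin_subset_Bij PC_hat_carrier_Bij carrier_SX
      by (metis subsetD)
    ultimately show ?thesis
      using h0(2) by metis
  qed (use h0 in blast)
qed

lemma even_part_hom:
  assumes "subgroup G PC"
  shows "even_part \<in> hom (PC\<lparr>carrier := G\<rparr>) (kap_ext G)"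
proof (rule homI)
  fix g assume "g \<in> carrier (PC\<lparr>carrier := G\<rparr>)"
  then have "g \<in> G" "g \<in> carrier PC"
    using subgroup.subset[OF assms] by auto
  then obtain h where h: "h \<in> PC_hat_carrier" "\<not> pc_odd h" "g = Sfin #>\<^bsub>SX\<^esub> h" "g \<in> G"
    using even_coset_representative by blast
  then have "h \<in> G_hat G"
    using SX_group.rcos_self[OF _ Sfin_subgroup] PC_hat_carrier_Bij carrier_SX
    unfolding G_hat_def by blast
  then show "even_part g \<in> carrier (kap_ext G)"
    unfolding carrier_kap_ext h(3) even_part_coset[OF h(1,2)] by blast
next
  fix g1 g2 assume "g1 \<in> carrier (PC\<lparr>carrier := G\<rparr>)" "g2 \<in> carrier (PC\<lparr>carrier := G\<rparr>)"
  then have "g1 \<in> carrier PC" "g2 \<in> carrier PC"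
    using subgroup.subset[OF assms] by auto
  then obtain h1 h2 where "h1 \<in> PC_hat_carrier" "\<not> pc_odd h1" "g1 = Sfin #>\<^bsub>SX\<^esub> h1"
    "h2 \<in> PC_hat_carrier" "\<not> pc_odd h2" "g2 = Sfin #>\<^bsub>SX\<^esub> h2"
    using even_coset_representative by meson
  then show "even_part (g1 \<otimes>\<^bsub>PC\<lparr>carrier := G\<rparr>\<^esub> g2) = even_part g1 \<otimes>\<^bsub>kap_ext G\<^esub> even_part g2"
    unfolding mult_PC mult_kap_ext using even_part_mult by simp
qed

lemma kap_proj_even_part:
  assumes "g \<in> carrier PC"
  shows "kap_proj (even_part g) = g"
proof -
  obtain h where "h \<in> PC_hat_carrier" "\<not> pc_odd h" "g = Sfin #>\<^bsub>SX\<^esub> h"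
    using even_coset_representative[OF assms] by blast
  then show ?thesis
    unfolding kap_proj_def using even_part_coset Afin_coset_mult_Sfin PC_hat_carrier_Bij by simp
qed

theorem corollary1p2:
  assumes "subgroup G PC"
  shows "kapoudjian_class_zero G"
  unfolding kapoudjian_class_zero_def
  using even_part_hom[OF assms] kap_proj_even_part subgroup.subset[OF assms] by blast

end
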